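(* Let $\rho^0\in\Lambda^*(x_0)$. Then $\rho^0$ is the outcome of a subgame perfect equilibrium in $(\mathcal{X},x_0)$.
   Context: Games: an arena $G=(\Pi,V,(V_i)_{i\in\Pi},E)$ has finite player set $\Pi$, finite vertex set $V$ ($|V|\ge2$, $|\Pi|\le|V|$), partition $(V_i)$ and edges $E$ with every vertex having a successor. A quantitative reachability game has targets $F_i\subseteq V$ and $\mathrm{Cost}_i(\rho)=$ least $k$ with $\rho_k\in F_i$ (or $+\infty$). Strategies map histories ending in $V_i$ to successors; a profile $\sigma$ has outcome $\langle\sigma\rangle_{v_0}$. $\sigma$ is a Nash equilibrium if no player can strictly decrease his cost of the outcome by unilaterally changing his strategy; it is a subgame perfect equilibrium if for every history $hv$ from the initial vertex, $\sigma_{|h}$ ($\sigma_{i|h}(h')=\sigma_i(hh')$) is a Nash equilibrium in the game from $v$ with costs $\rho\mapsto\mathrm{Cost}_i(h\rho)$. Extended game of $(\mathcal{G},v_0)$: $\mathcal{X}$ is the reachability game on arena $X$ with $V^X=V\times2^\Pi$, $((v,I),(v',I'))\in E^X$ iff $(v,v')\in E$ and $I'=I\cup\{i:v'\in F_i\}$, $(v,I)\in V^X_i$ iff $v\in V_i$, targets $F^X_i=\{(v,I):i\in I\}$; $x_0=(v_0,\{i:v_0\in F_i\})$. $I(u)$ is the second component of $u$. $\mathcal{I}$ is the set of $I$ with some $(v,I)$ reachable from $x_0$, $N=|\mathcal{I}|$, and $J_1<\dots<J_N$ a fixed total order of $\mathcal{I}$ extending $I<I'$ iff $I\ne I'$ and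 some $(v',I')$ is reachable from some $(v,I)$. $V^{\ge J_n}=\{(v,J_m):v\in V,m\ge n\}$. Labelings: for $\lambda:V^X\to\mathbb{N}\cup\{+\infty\}$, a play $\rho$ of $X$ is $\lambda$-consistent if $\mathrm{Cost}_i(\rho_{\ge n})\le\lambda(\rho_n)$ for all $n$ and $i$ with $\rho_n\in V^X_i$. $\lambda^0(u)=0$ if $u\in V^X_i$ and $i\in I(u)$, else $+\infty$. The update of $\lambda^k$ w.r.t. $V^{\ge J_n}$ keeps values outside $V^{\ge J_n}$ and for $u\in V^{\ge J_n}\cap V^X_i$ sets $\lambda^{k+1}(u)=0$ if $i\in I(u)$, otherwise $1+\min_{(u,u')\in E^X}\sup\{\mathrm{Cost}_i(\rho):\rho\in\Lambda^k(u')\}$, $\Lambda^k(u')$ being the $\lambda^k$-consistent plays from $u'$ and $1+(+\infty)=+\infty$. The sequence is generated by $n_0=N$, $\lambda^{k+1}=$ update of $\lambda^k$ w.r.t. $V^{\ge J_{n_k}}$, $n_{k+1}=n_k-1$ if $\lambda^{k+1}=\lambda^k$ and $n_k>1$, else $n_{k+1}=n_k$. It eventually becomes constant, equal to $\lambda^*$; $\Lambda^*(v)$ is the set of $\lambda^*$-consistent plays from $v$. *)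

theory Defs
  imports Main "HOL-Library.Extended_Nat"
begin

definition arena :: "'p set \<Rightarrow> 'v set \<Rightarrow> ('v \<Rightarrow> 'p) \<Rightarrow> ('v \<times> 'v) set \<Rightarrow> bool" where
  "arena Pl V own E \<longleftrightarrow> finite Pl \<and> finite V \<and> card V \<ge> 2 \<and> card Pl \<le> card V
     \<and> (\<forall>v\<in>V. own v \<in> Pl) \<and> E \<subseteq> V \<times> V \<and> (\<forall>v\<in>V. \<exists>v'. (v, v') \<in> E)"

definition is_play :: "'a set \<Rightarrow> ('a \<times> 'a) set \<Rightarrow> (nat \<Rightarrow> 'a) \<Rightarrow> bool" where
  "is_play V E \<rho> \<longleftrightarrow> (\<forall>n. \<rho> n \<in> V \<and> (\<rho> n, \<rho> (Suc n)) \<in> E)"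

definition is_history :: "'a set \<Rightarrow> ('a \<times> 'a) set \<Rightarrow> 'a list \<Rightarrow> bool" where
  "is_history V E h \<longleftrightarrow> h \<noteq> [] \<and> set h \<subseteq> V \<and> (\<forall>k. Suc k < length h \<longrightarrow> (h ! k, h ! Suc k) \<in> E)"

definition cost :: "'a set \<Rightarrow> (nat \<Rightarrow> 'a) \<Rightarrow> enat" where
  "cost T \<rho> = (if \<exists>k. \<rho> k \<in> T then enat (LEAST k. \<rho> k \<in> T) else \<infinity>)"

definition prepend :: "'a list \<Rightarrow> (nat \<Rightarrow> 'a) \<Rightarrow> (nat \<Rightarrow> 'a)" where
  "prepend h \<rho> = (\<lambda>n. if n < length h then h ! n else \<rho> (n - length h))"

definition suffix_from :: "nat \<Rightarrow> (nat \<Rightarrow> 'a) \<Rightarrow> (nat \<Rightarrow> 'a)" where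
  "suffix_from n \<rho> = (\<lambda>k. \<rho> (n + k))"

definition is_strategy :: "'a set \<Rightarrow> ('a \<Rightarrow> 'p) \<Rightarrow> ('a \<times> 'a) set \<Rightarrow> 'p \<Rightarrow> ('a list \<Rightarrow> 'a) \<Rightarrow> bool" where
  "is_strategy V own E i s \<longleftrightarrow>
     (\<forall>h. is_history V E h \<and> own (last h) = i \<longrightarrow> (last h, s h) \<in> E)"

definition is_profile :: "'p set \<Rightarrow> 'a set \<Rightarrow> ('a \<Rightarrow> 'p) \<Rightarrow> ('a \<times> 'a) set \<Rightarrow> ('p \<Rightarrow> 'a list \<Rightarrow> 'a) \<Rightarrow> bool" where
  "is_profile Pl V own E \<sigma> \<longleftrightarrow> (\<forall>i\<in>Pl. is_strategy V own E i (\<sigma> i))"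

fun out_hist :: "('a \<Rightarrow> 'p) \<Rightarrow> ('p \<Rightarrow> 'a list \<Rightarrow> 'a) \<Rightarrow> 'a \<Rightarrow> nat \<Rightarrow> 'a list" where
  "out_hist own \<sigma> v 0 = [v]"
| "out_hist own \<sigma> v (Suc n) = (let h = out_hist own \<sigma> v n in h @ [\<sigma> (own (last h)) h])"

definition outcome :: "('a \<Rightarrow> 'p) \<Rightarrow> ('p \<Rightarrow> 'a list \<Rightarrow> 'a) \<Rightarrow> 'a \<Rightarrow> (nat \<Rightarrow> 'a)" where
  "outcome own \<sigma> v = (\<lambda>n. last (out_hist own \<sigma> v n))"

definition is_NE :: "'p set \<Rightarrow> 'a set \<Rightarrow> ('a \<Rightarrow> 'p) \<Rightarrow> ('a \<times> 'a) set \<Rightarrow> ('p \<Rightarrow> 'a list \<Rightarrow> 'a) \<Rightarrow> 'a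
     \<Rightarrow> ('p \<Rightarrow> (nat \<Rightarrow> 'a) \<Rightarrow> enat) \<Rightarrow> bool" where
  "is_NE Pl V own E \<sigma> v c \<longleftrightarrow>
     (\<forall>i\<in>Pl. \<forall>\<tau>. is_strategy V own E i \<tau> \<longrightarrow>
        c i (outcome own \<sigma> v) \<le> c i (outcome own (\<sigma>(i := \<tau>)) v))"

definition is_SPE :: "'p set \<Rightarrow> 'a set \<Rightarrow> ('a \<Rightarrow> 'p) \<Rightarrow> ('a \<times> 'a) set \<Rightarrow> ('p \<Rightarrow> 'a set)
     \<Rightarrow> ('p \<Rightarrow> 'a list \<Rightarrow> 'a) \<Rightarrow> 'a \<Rightarrow> bool" where
  "is_SPE Pl V own E F \<sigma> v0 \<longleftrightarrow>
     (\<forall>h v. is_history V E (h @ [v]) \<and> hd (h @ [v]) = v0 \<longrightarrow>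
        is_NE Pl V own E (\<lambda>i h'. \<sigma> i (h @ h')) v (\<lambda>i \<rho>. cost (F i) (prepend h \<rho>)))"

definition VertX :: "'v set \<Rightarrow> 'p set \<Rightarrow> ('v \<times> 'p set) set" where
  "VertX V Pl = V \<times> Pow Pl"

definition EdgX :: "'p set \<Rightarrow> ('v \<times> 'v) set \<Rightarrow> ('p \<Rightarrow> 'v set) \<Rightarrow> (('v \<times> 'p set) \<times> ('v \<times> 'p set)) set" where
  "EdgX Pl E F = {((v, I), (v', I')). (v, v') \<in> E \<and> I \<subseteq> Pl \<and> I' = I \<union> {i \<in> Pl. v' \<in> F i}}"

definition ownX :: "('v \<Rightarrow> 'p) \<Rightarrow> ('v \<times> 'p set) \<Rightarrow> 'p" where
  "ownX own u = own (fst u)"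

definition FX :: "'v set \<Rightarrow> 'p set \<Rightarrow> 'p \<Rightarrow> ('v \<times> 'p set) set" where
  "FX V Pl i = {u \<in> VertX V Pl. i \<in> snd u}"

definition x0 :: "'p set \<Rightarrow> ('p \<Rightarrow> 'v set) \<Rightarrow> 'v \<Rightarrow> 'v \<times> 'p set" where
  "x0 Pl F v0 = (v0, {i \<in> Pl. v0 \<in> F i})"

definition calI :: "'p set \<Rightarrow> ('v \<times> 'v) set \<Rightarrow> ('p \<Rightarrow> 'v set) \<Rightarrow> 'v \<Rightarrow> 'p set set" where
  "calI Pl E F v0 = {I. \<exists>v. (x0 Pl F v0, (v, I)) \<in> (EdgX Pl E F)\<^sup>*}"

text \<open>J 1 < ... < J N is an enumeration of \<I> (N = card \<I>) which is a total order
  extending I < I' iff I \<noteq> I' and some (v',I') is reachable from some (v,I).\<close>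
definition admissible_order :: "'p set \<Rightarrow> ('v \<times> 'v) set \<Rightarrow> ('p \<Rightarrow> 'v set) \<Rightarrow> 'v \<Rightarrow> (nat \<Rightarrow> 'p set) \<Rightarrow> bool" where
  "admissible_order Pl E F v0 J \<longleftrightarrow>
     bij_betw J {1..card (calI Pl E F v0)} (calI Pl E F v0) \<and>
     (\<forall>m\<in>{1..card (calI Pl E F v0)}. \<forall>n\<in>{1..card (calI Pl E F v0)}.
        J m \<noteq> J n \<and> (\<exists>v v'. ((v, J m), (v', J n)) \<in> (EdgX Pl E F)\<^sup>*) \<longrightarrow> m < n)"

definition Vge :: "'v set \<Rightarrow> (nat \<Rightarrow> 'p set) \<Rightarrow> nat \<Rightarrow> nat \<Rightarrow> ('v \<times> 'p set) set" where
  "Vge V J N n = {(v, J m) | v m. v \<in> V \<and> n \<le> m \<and> m \<le> N}"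

definition Lam :: "'p set \<Rightarrow> 'v set \<Rightarrow> ('v \<Rightarrow> 'p) \<Rightarrow> ('v \<times> 'v) set \<Rightarrow> ('p \<Rightarrow> 'v set)
     \<Rightarrow> ('v \<times> 'p set \<Rightarrow> enat) \<Rightarrow> 'v \<times> 'p set \<Rightarrow> (nat \<Rightarrow> 'v \<times> 'p set) set" where
  "Lam Pl V own E F lam u = {\<rho>. is_play (VertX V Pl) (EdgX Pl E F) \<rho> \<and> \<rho> 0 = u \<and>
     (\<forall>n. cost (FX V Pl (ownX own (\<rho> n))) (suffix_from n \<rho>) \<le> lam (\<rho> n))}"

definition lam0 :: "('v \<Rightarrow> 'p) \<Rightarrow> 'v \<times> 'p set \<Rightarrow> enat" where
  "lam0 own u = (if ownX own u \<in> snd u then 0 else \<infinity>)"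

definition lam_update :: "'p set \<Rightarrow> 'v set \<Rightarrow> ('v \<Rightarrow> 'p) \<Rightarrow> ('v \<times> 'v) set \<Rightarrow> ('p \<Rightarrow> 'v set)
     \<Rightarrow> (nat \<Rightarrow> 'p set) \<Rightarrow> nat \<Rightarrow> ('v \<times> 'p set \<Rightarrow> enat) \<Rightarrow> nat \<Rightarrow> ('v \<times> 'p set \<Rightarrow> enat)" where
  "lam_update Pl V own E F J N lam n = (\<lambda>u.
     if u \<in> Vge V J N n then
       (if ownX own u \<in> snd u then 0
        else 1 + (INF u'\<in>{u'. (u, u') \<in> EdgX Pl E F}.
                    SUP \<rho>\<in>Lam Pl V own E F lam u'. cost (FX V Pl (ownX own u)) \<rho>))
     else lam u)"

fun lam_seq :: "'p set \<Rightarrow> 'v set \<Rightarrow> ('v \<Rightarrow> 'p) \<Rightarrow> ('v \<times> 'v) set \<Rightarrow> ('p \<Rightarrow> 'v set) \<Rightarrow> 'v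
     \<Rightarrow> (nat \<Rightarrow> 'p set) \<Rightarrow> nat \<Rightarrow> ('v \<times> 'p set \<Rightarrow> enat) \<times> nat" where
  "lam_seq Pl V own E F v0 J 0 = (lam0 own, card (calI Pl E F v0))"
| "lam_seq Pl V own E F v0 J (Suc k) =
     (let (l, n) = lam_seq Pl V own E F v0 J k;
          l' = lam_update Pl V own E F J (card (calI Pl E F v0)) l n
      in (l', if l' = l \<and> n > 1 then n - 1 else n))"

definition lam_star :: "'p set \<Rightarrow> 'v set \<Rightarrow> ('v \<Rightarrow> 'p) \<Rightarrow> ('v \<times> 'v) set \<Rightarrow> ('p \<Rightarrow> 'v set) \<Rightarrow> 'v
     \<Rightarrow> (nat \<Rightarrow> 'p set) \<Rightarrow> ('v \<times> 'p set \<Rightarrow> enat)" where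
  "lam_star Pl V own E F v0 J =
     (THE l. \<exists>K. \<forall>k\<ge>K. fst (lam_seq Pl V own E F v0 J k) = l)"

definition Lam_star :: "'p set \<Rightarrow> 'v set \<Rightarrow> ('v \<Rightarrow> 'p) \<Rightarrow> ('v \<times> 'v) set \<Rightarrow> ('p \<Rightarrow> 'v set) \<Rightarrow> 'v
     \<Rightarrow> (nat \<Rightarrow> 'p set) \<Rightarrow> 'v \<times> 'p set \<Rightarrow> (nat \<Rightarrow> 'v \<times> 'p set) set" where
  "Lam_star Pl V own E F v0 J = Lam Pl V own E F (lam_star Pl V own E F v0 J)"

end

(*
  The equilibrium follows \<rho>0 and punishes deviations. After every history it has a plan, a
  \<lambda>*-consistent play from the current vertex. When the owner i of a vertex u leaves the plan
  for a successor w, the plan is replaced by a \<lambda>*-consistent play from w that is worst for i;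
  the supremum of i's costs over \<Lambda>*(w) is attained, by Koenig's lemma when it is infinite.
  As \<lambda>* is a fixpoint of the update, \<lambda>*(u) \<le> 1 + sup {Cost_i(\<rho>) | \<rho> \<in> \<Lambda>*(w)}, so the cost
  of i along the abandoned plan, which is at most \<lambda>*(u), exceeds his cost after the deviation
  by at most the one step it takes: no deviation pays off, after any history.

  \<Lambda>*(w) is nonempty because the outcomes of a subgame perfect equilibrium of the extended
  game are consistent with every labelling of the sequence. Such an equilibrium exists: it is a
  limit, by compactness, of backward-induction profiles for the games truncated at a finite
  horizon.
*)

theory Submission
  imports Defs "HOL-Library.FuncSet"
begin

section \<open>Plays induced by strategy profiles\<close>

fun extend_hist :: "('a \<Rightarrow> 'p) \<Rightarrow> ('p \<Rightarrow> 'a list \<Rightarrow> 'a) \<Rightarrow> 'a list \<Rightarrow> nat \<Rightarrow> 'a list" where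
  "extend_hist own \<sigma> g 0 = g"
| "extend_hist own \<sigma> g (Suc n) =
     extend_hist own \<sigma> g n @ [\<sigma> (own (last (extend_hist own \<sigma> g n))) (extend_hist own \<sigma> g n)]"

definition outcome_after :: "('a \<Rightarrow> 'p) \<Rightarrow> ('p \<Rightarrow> 'a list \<Rightarrow> 'a) \<Rightarrow> 'a list \<Rightarrow> nat \<Rightarrow> 'a" where
  "outcome_after own \<sigma> g = (\<lambda>k. extend_hist own \<sigma> g k ! k)"

lemma length_extend_hist [simp]: "length (extend_hist own \<sigma> g n) = length g + n"
  by (induction n) auto

lemma extend_hist_not_Nil [simp]: "g \<noteq> [] \<Longrightarrow> extend_hist own \<sigma> g n \<noteq> []"
  by (induction n) auto

lemma hd_extend_hist [simp]: "g \<noteq> [] \<Longrightarrow> hd (extend_hist own \<sigma> g n) = hd g"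
  by (induction n) auto

lemma extend_hist_add: "extend_hist own \<sigma> (extend_hist own \<sigma> g m) n = extend_hist own \<sigma> g (m + n)"
  by (induction n) auto

lemma take_extend_hist:
  "m \<le> n \<Longrightarrow> take (length g + m) (extend_hist own \<sigma> g n) = extend_hist own \<sigma> g m"
  by (induction n) (auto simp: le_Suc_eq)

lemma nth_extend_hist:
  assumes "g \<noteq> []" "k < length g + n"
  shows "extend_hist own \<sigma> g n ! k = outcome_after own \<sigma> g k"
proof -
  have stable: "extend_hist own \<sigma> g m ! k = extend_hist own \<sigma> g M ! k"
    if "m \<le> M" "k < length g + m" for m M
    using take_extend_hist[OF that(1)] that(2) by (metis nth_take)
  show ?thesis
    unfolding outcome_after_def using assms stable[of n "max k n"] stable[of k "max k n"] by simp
qed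

lemma outcome_after_hist: "k < length g \<Longrightarrow> outcome_after own \<sigma> g k = g ! k"
  using nth_extend_hist[of g k 0 own \<sigma>] by (cases g) auto

lemma outcome_after_last: "g \<noteq> [] \<Longrightarrow> outcome_after own \<sigma> g (length g - 1) = last g"
  by (simp add: outcome_after_hist last_conv_nth)

lemma last_extend_hist:
  "g \<noteq> [] \<Longrightarrow> last (extend_hist own \<sigma> g n) = outcome_after own \<sigma> g (length g - 1 + n)"
  by (cases g) (auto simp: last_conv_nth nth_extend_hist)

lemma outcome_after_extend_hist:
  assumes "g \<noteq> []"
  shows "outcome_after own \<sigma> (extend_hist own \<sigma> g m) = outcome_after own \<sigma> g"
proof
  fix k
  have "outcome_after own \<sigma> (extend_hist own \<sigma> g m) k = extend_hist own \<sigma> (extend_hist own \<sigma> g m) (Suc k) ! k"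
    by (rule nth_extend_hist[symmetric]) (use assms in auto)
  also have "\<dots> = extend_hist own \<sigma> g (m + Suc k) ! k"
    by (simp only: extend_hist_add)
  also have "\<dots> = outcome_after own \<sigma> g k"
    by (rule nth_extend_hist) (use assms in auto)
  finally show "outcome_after own \<sigma> (extend_hist own \<sigma> g m) k = outcome_after own \<sigma> g k" .
qed

lemma outcome_after_snoc:
  "g \<noteq> [] \<Longrightarrow> w = \<sigma> (own (last g)) g \<Longrightarrow> outcome_after own \<sigma> (g @ [w]) = outcome_after own \<sigma> g"
  using outcome_after_extend_hist[of g own \<sigma> 1] by simp

lemma outcome_eq_outcome_after: "outcome own \<sigma> v = outcome_after own \<sigma> [v]"
proof -
  have "out_hist own \<sigma> v n = extend_hist own \<sigma> [v] n" for n
    by (induction n) (auto simp: Let_def)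
  then show ?thesis
    by (auto simp: fun_eq_iff outcome_def last_extend_hist)
qed

lemma extend_hist_cong:
  assumes "\<And>i h. h \<noteq> [] \<Longrightarrow> \<sigma> i h = \<sigma>' i h" "g \<noteq> []"
  shows "extend_hist own \<sigma> g n = extend_hist own \<sigma>' g n"
  by (induction n) (use assms in auto)

lemma extend_hist_restrict:
  "extend_hist own (\<lambda>i h'. \<sigma> i (h @ h')) [v] n = drop (length h) (extend_hist own \<sigma> (h @ [v]) n)"
proof -
  have "extend_hist own \<sigma> (h @ [v]) n = h @ extend_hist own (\<lambda>i h'. \<sigma> i (h @ h')) [v] n"
    by (induction n) (auto simp: last_append)
  then show ?thesis by simp
qed

lemma outcome_after_restrict:
  "outcome_after own \<sigma> (h @ [v]) = prepend h (outcome own (\<lambda>i h'. \<sigma> i (h @ h')) v)"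
proof
  fix k
  show "outcome_after own \<sigma> (h @ [v]) k = prepend h (outcome own (\<lambda>i h'. \<sigma> i (h @ h')) v) k"
  proof (cases "k < length h")
    case True
    then show ?thesis by (simp add: prepend_def outcome_after_hist nth_append)
  next
    case False
    then have "outcome own (\<lambda>i h'. \<sigma> i (h @ h')) v (k - length h)
        = extend_hist own \<sigma> (h @ [v]) (k - length h) ! k"
      by (simp add: outcome_eq_outcome_after outcome_after_def extend_hist_restrict)
    then show ?thesis
      using False by (simp add: prepend_def nth_extend_hist)
  qed
qed

lemma outcome_after_one_deviation:
  assumes "g \<noteq> []" "own (last g) = j" "\<tau> g = w" "\<And>h. length h > length g \<Longrightarrow> \<tau> h = s h"
  shows "outcome_after own ((\<lambda>i. s)(j := \<tau>)) g = outcome_after own (\<lambda>i. s) (g @ [w])"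
proof
  fix k
  have ext: "extend_hist own ((\<lambda>i. s)(j := \<tau>)) g (Suc n) = extend_hist own (\<lambda>i. s) (g @ [w]) n" for n
    by (induction n) (use assms in auto)
  have "outcome_after own ((\<lambda>i. s)(j := \<tau>)) g k = extend_hist own ((\<lambda>i. s)(j := \<tau>)) g (Suc k) ! k"
    by (rule nth_extend_hist[symmetric]) (use assms in auto)
  then show "outcome_after own ((\<lambda>i. s)(j := \<tau>)) g k = outcome_after own (\<lambda>i. s) (g @ [w]) k"
    by (simp only: ext outcome_after_def)
qed

lemma suffix_from_apply [simp]: "suffix_from a \<rho> k = \<rho> (a + k)"
  by (simp add: suffix_from_def)

lemma suffix_from_0 [simp]: "suffix_from 0 \<rho> = \<rho>"
  by (simp add: suffix_from_def)

lemma suffix_from_suffix_from [simp]: "suffix_from a (suffix_from b \<rho>) = suffix_from (b + a) \<rho>"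
  by (simp add: suffix_from_def add.assoc)

lemma cost_le_iff: "cost S \<rho> \<le> enat t \<longleftrightarrow> (\<exists>k\<le>t. \<rho> k \<in> S)"
proof
  assume "cost S \<rho> \<le> enat t"
  then show "\<exists>k\<le>t. \<rho> k \<in> S"
    unfolding cost_def by (auto split: if_splits intro: LeastI)
next
  assume "\<exists>k\<le>t. \<rho> k \<in> S"
  then show "cost S \<rho> \<le> enat t"
    unfolding cost_def by (auto intro: le_trans[OF Least_le])
qed

lemma cost_less_iff: "cost S \<rho> < enat t \<longleftrightarrow> (\<exists>k<t. \<rho> k \<in> S)"
proof (cases t)
  case (Suc t')
  then have "cost S \<rho> < enat t \<longleftrightarrow> cost S \<rho> \<le> enat t'"
    by (cases "cost S \<rho>") auto
  then show ?thesis
    using Suc by (auto simp: cost_le_iff less_Suc_eq_le)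
qed (simp add: enat_0)

lemma cost_eq_enat_iff: "cost S \<rho> = enat t \<longleftrightarrow> \<rho> t \<in> S \<and> (\<forall>k<t. \<rho> k \<notin> S)"
  unfolding cost_def
  by (auto intro: LeastI dest: not_less_Least intro!: Least_equality simp: not_less[symmetric])

lemma cost_eq_infinity_iff: "cost S \<rho> = \<infinity> \<longleftrightarrow> (\<forall>k. \<rho> k \<notin> S)"
  unfolding cost_def by auto

lemma cost_eq_0: "\<rho> 0 \<in> S \<Longrightarrow> cost S \<rho> = 0"
  using cost_eq_enat_iff[of S \<rho> 0] by (simp add: zero_enat_def)

lemma cost_suffix_from:
  assumes "\<forall>k<a. \<rho> k \<notin> S"
  shows "cost S \<rho> = enat a + cost S (suffix_from a \<rho>)"
proof (cases "cost S (suffix_from a \<rho>)")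
  case (enat t)
  have "\<rho> k \<notin> S" if "k < a + t" for k
  proof (cases "k < a")
    case False
    then obtain j where "k = a + j" "j < t"
      using \<open>k < a + t\<close> by (metis add_diff_inverse_nat nat_add_left_cancel_less)
    then show ?thesis using enat unfolding cost_eq_enat_iff by simp
  qed (use assms in blast)
  then have "cost S \<rho> = enat (a + t)"
    using enat unfolding cost_eq_enat_iff by simp
  then show ?thesis using enat by simp
next
  case infinity
  have "\<rho> k \<notin> S" for k
  proof (cases "k < a")
    case False
    then obtain j where "k = a + j"
      by (metis le_add_diff_inverse not_less)
    then show ?thesis using infinity unfolding cost_eq_infinity_iff by simp
  qed (use assms in blast)
  then have "cost S \<rho> = \<infinity>"
    unfolding cost_eq_infinity_iff by blast
  then show ?thesis using infinity by simp
qed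

lemma cost_Suc: "\<rho> 0 \<notin> S \<Longrightarrow> cost S \<rho> = 1 + cost S (suffix_from 1 \<rho>)"
  using cost_suffix_from[of 1 \<rho> S] by (simp add: one_enat_def)

lemma cost_eq_if_agree_upto:
  assumes "\<forall>k\<le>t. \<rho> k = \<rho>' k" "cost S \<rho> \<le> enat t"
  shows "cost S \<rho>' = cost S \<rho>"
proof -
  obtain c where c: "cost S \<rho> = enat c" "c \<le> t"
    using assms(2) by (cases "cost S \<rho>") auto
  then have "cost S \<rho>' = enat c"
    using assms(1) unfolding cost_eq_enat_iff by auto
  then show ?thesis using c by simp
qed

lemma is_history_single [simp]: "is_history V E [v] \<longleftrightarrow> v \<in> V"
  by (simp add: is_history_def)

lemma is_history_snoc:
  assumes "g \<noteq> []"
  shows "is_history V E (g @ [w]) \<longleftrightarrow> is_history V E g \<and> (last g, w) \<in> E \<and> w \<in> V"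
proof -
  let ?edge = "\<lambda>h k. (h ! k, h ! Suc k) \<in> E"
  have "(\<forall>k. Suc k < length (g @ [w]) \<longrightarrow> ?edge (g @ [w]) k) \<longleftrightarrow>
        (\<forall>k. Suc k < length g \<longrightarrow> ?edge (g @ [w]) k) \<and> ?edge (g @ [w]) (length g - 1)"
  proof
    assume all: "\<forall>k. Suc k < length (g @ [w]) \<longrightarrow> ?edge (g @ [w]) k"
    moreover have "Suc (length g - 1) < length (g @ [w])"
      using assms by simp
    ultimately show "(\<forall>k. Suc k < length g \<longrightarrow> ?edge (g @ [w]) k) \<and> ?edge (g @ [w]) (length g - 1)"
      by simp
  next
    assume all: "(\<forall>k. Suc k < length g \<longrightarrow> ?edge (g @ [w]) k) \<and> ?edge (g @ [w]) (length g - 1)"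
    show "\<forall>k. Suc k < length (g @ [w]) \<longrightarrow> ?edge (g @ [w]) k"
    proof (intro allI impI)
      fix k
      assume "Suc k < length (g @ [w])"
      then have "Suc k < length g \<or> k = length g - 1" by auto
      then show "?edge (g @ [w]) k" using all by blast
    qed
  qed
  moreover have "?edge (g @ [w]) k \<longleftrightarrow> ?edge g k" if "Suc k < length g" for k
    using that by (simp add: nth_append)
  moreover have "?edge (g @ [w]) (length g - 1) \<longleftrightarrow> (last g, w) \<in> E"
    using assms by (simp add: nth_append last_conv_nth)
  ultimately show ?thesis
    using assms unfolding is_history_def by auto
qed

lemma is_history_drop:
  assumes "is_history V E g" "k < length g"
  shows "is_history V E (drop k g)"
  using assms set_drop_subset[of k g] unfolding is_history_def by fastforce

lemma last_in_V_if_is_history: "is_history V E g \<Longrightarrow> last g \<in> V"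
  unfolding is_history_def by (meson last_in_set subsetD)

definition legal_profile :: "'a set \<Rightarrow> ('a \<times> 'a) set \<Rightarrow> ('a \<Rightarrow> 'p) \<Rightarrow> ('p \<Rightarrow> 'a list \<Rightarrow> 'a) \<Rightarrow> bool" where
  "legal_profile V E own \<sigma> \<longleftrightarrow> (\<forall>h. is_history V E h \<longrightarrow> (last h, \<sigma> (own (last h)) h) \<in> E)"

lemma legal_profile_update:
  "legal_profile V E own \<sigma> \<Longrightarrow> is_strategy V own E i \<tau> \<Longrightarrow> legal_profile V E own (\<sigma>(i := \<tau>))"
  unfolding legal_profile_def is_strategy_def by auto

lemma legal_profile_uniform:
  "(\<And>h. is_history V E h \<Longrightarrow> (last h, s h) \<in> E) \<Longrightarrow> legal_profile V E own (\<lambda>i. s)"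
  unfolding legal_profile_def by auto

lemma is_history_extend_hist:
  assumes "E \<subseteq> V \<times> V" "legal_profile V E own \<sigma>" "is_history V E g"
  shows "is_history V E (extend_hist own \<sigma> g n)"
proof (induction n)
  case (Suc n)
  have "extend_hist own \<sigma> g n \<noteq> []"
    using assms(3) by (simp add: is_history_def)
  then show ?case
    using Suc assms(1,2) by (auto simp: legal_profile_def is_history_snoc)
qed (use assms in simp)

lemma is_play_outcome_after:
  assumes "E \<subseteq> V \<times> V" "legal_profile V E own \<sigma>" "is_history V E g"
  shows "is_play V E (outcome_after own \<sigma> g)"
  unfolding is_play_def
proof
  fix k
  let ?h = "extend_hist own \<sigma> g (Suc (Suc k))"
  have g: "g \<noteq> []" using assms(3) by (simp add: is_history_def)
  have "outcome_after own \<sigma> g k = ?h ! k"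
    by (rule nth_extend_hist[symmetric]) (use g in simp_all)
  moreover have "outcome_after own \<sigma> g (Suc k) = ?h ! Suc k"
    by (rule nth_extend_hist[symmetric]) (use g in simp_all)
  moreover have "is_history V E ?h"
    by (rule is_history_extend_hist[OF assms])
  ultimately show "outcome_after own \<sigma> g k \<in> V \<and> (outcome_after own \<sigma> g k, outcome_after own \<sigma> g (Suc k)) \<in> E"
    unfolding is_history_def by (auto simp del: extend_hist.simps)
qed

lemma outcome_after_agree:
  assumes "E \<subseteq> V \<times> V" "legal_profile V E own \<sigma>" "is_history V E g"
    and agree: "\<And>h. is_history V E h \<Longrightarrow> length h < M \<Longrightarrow> \<sigma> (own (last h)) h = \<sigma>' (own (last h)) h"
    and "k < M"
  shows "outcome_after own \<sigma> g k = outcome_after own \<sigma>' g k"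
proof (cases "k < length g")
  case False
  have g: "g \<noteq> []" using assms(3) by (simp add: is_history_def)
  have "extend_hist own \<sigma> g n = extend_hist own \<sigma>' g n" if "length g + n \<le> M" for n
    using that
  proof (induction n)
    case (Suc n)
    then have "extend_hist own \<sigma> g n = extend_hist own \<sigma>' g n" by simp
    moreover have "is_history V E (extend_hist own \<sigma> g n)"
      by (rule is_history_extend_hist[OF assms(1-3)])
    ultimately show ?case
      using agree[of "extend_hist own \<sigma> g n"] Suc.prems by simp
  qed simp
  then have "extend_hist own \<sigma> g (Suc k - length g) = extend_hist own \<sigma>' g (Suc k - length g)"
    using False \<open>k < M\<close> by simp
  then show ?thesis
    using False g by (simp add: nth_extend_hist[symmetric, of g k "Suc k - length g"])
qed (simp add: outcome_after_hist)

definition lift_strategy :: "'a list \<Rightarrow> ('a list \<Rightarrow> 'a) \<Rightarrow> ('a list \<Rightarrow> 'a) \<Rightarrow> 'a list \<Rightarrow> 'a" where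
  "lift_strategy h \<tau> s g = (if length h < length g \<and> take (length h) g = h then \<tau> (drop (length h) g) else s g)"

lemma is_strategy_lift_strategy:
  assumes \<tau>: "is_strategy V own E i \<tau>" and s: "is_strategy V own E i s"
  shows "is_strategy V own E i (lift_strategy h \<tau> s)"
  unfolding is_strategy_def
proof (intro allI impI)
  fix g
  assume g: "is_history V E g \<and> own (last g) = i"
  show "(last g, lift_strategy h \<tau> s g) \<in> E"
  proof (cases "length h < length g \<and> take (length h) g = h")
    case True
    then have "is_history V E (drop (length h) g)" "last (drop (length h) g) = last g"
      using is_history_drop g by auto
    then show ?thesis
      using \<tau> g True unfolding is_strategy_def lift_strategy_def by auto
  next
    case False
    then show ?thesis
      using s g unfolding is_strategy_def lift_strategy_def by auto
  qed
qed

lemma prepend_outcome_deviation: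
  "prepend h (outcome own ((\<lambda>j h'. \<sigma> j (h @ h'))(i := \<tau>)) v)
    = outcome_after own (\<sigma>(i := lift_strategy h \<tau> (\<sigma> i))) (h @ [v])"
proof -
  let ?\<sigma>' = "\<sigma>(i := lift_strategy h \<tau> (\<sigma> i))"
  have "extend_hist own (\<lambda>j h'. ?\<sigma>' j (h @ h')) [v] n = extend_hist own ((\<lambda>j h'. \<sigma> j (h @ h'))(i := \<tau>)) [v] n"
    for n
    by (rule extend_hist_cong) (auto simp: lift_strategy_def)
  then have "outcome own ((\<lambda>j h'. \<sigma> j (h @ h'))(i := \<tau>)) v = outcome own (\<lambda>j h'. ?\<sigma>' j (h @ h')) v"
    unfolding outcome_eq_outcome_after outcome_after_def by simp
  then show ?thesis
    by (simp only: outcome_after_restrict)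
qed

lemma is_SPE_if_NE_after_histories:
  assumes profile: "is_profile Pl V own E \<sigma>"
    and NE: "\<And>g i \<tau>. is_history V E g \<Longrightarrow> hd g = v0 \<Longrightarrow> i \<in> Pl \<Longrightarrow> is_strategy V own E i \<tau> \<Longrightarrow>
      cost (F i) (outcome_after own \<sigma> g) \<le> cost (F i) (outcome_after own (\<sigma>(i := \<tau>)) g)"
  shows "is_SPE Pl V own E F \<sigma> v0"
  unfolding is_SPE_def is_NE_def
proof (intro allI impI ballI)
  fix h v i \<tau>
  assume hv: "is_history V E (h @ [v]) \<and> hd (h @ [v]) = v0"
    and i: "i \<in> Pl" and \<tau>: "is_strategy V own E i \<tau>"
  have "is_strategy V own E i (lift_strategy h \<tau> (\<sigma> i))"
    using is_strategy_lift_strategy[OF \<tau>] profile i unfolding is_profile_def by blast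
  then show "cost (F i) (prepend h (outcome own (\<lambda>j h'. \<sigma> j (h @ h')) v))
      \<le> cost (F i) (prepend h (outcome own ((\<lambda>j h'. \<sigma> j (h @ h'))(i := \<tau>)) v))"
    unfolding prepend_outcome_deviation outcome_after_restrict[symmetric] using NE hv i by blast
qed

section \<open>A compactness principle\<close>

definition adherent_on :: "(nat \<Rightarrow> ('x \<Rightarrow> 'b) set) \<Rightarrow> 'x set \<Rightarrow> ('x \<Rightarrow> 'b) \<Rightarrow> bool" where
  "adherent_on A X f \<longleftrightarrow> (\<forall>n. \<exists>g\<in>A n. \<forall>x\<in>X. g x = f x)"

lemma adherent_on_extend:
  assumes adh: "adherent_on A X f" and "X \<subseteq> Y" "finite Y" "finite B" "antimono A"
    and vals: "\<And>n g y. g \<in> A n \<Longrightarrow> y \<in> Y \<Longrightarrow> g y \<in> B"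
  shows "\<exists>f'. adherent_on A Y f' \<and> (\<forall>x\<in>X. f' x = f x)"
proof (rule ccontr)
  let ?C = "{e \<in> Y \<rightarrow>\<^sub>E B. \<forall>x\<in>X. e x = f x}"
  assume "\<nexists>f'. adherent_on A Y f' \<and> (\<forall>x\<in>X. f' x = f x)"
  then have "\<forall>e\<in>?C. \<exists>n. \<forall>g\<in>A n. \<exists>y\<in>Y. g y \<noteq> e y"
    unfolding adherent_on_def by blast
  then obtain level where level: "\<forall>e\<in>?C. \<forall>g\<in>A (level e). \<exists>y\<in>Y. g y \<noteq> e y"
    by (rule bchoice[elim_format]) blast
  have "finite ?C"
    using \<open>finite Y\<close> \<open>finite B\<close> by (simp add: finite_PiE)
  obtain g where g: "g \<in> A (\<Sum>e\<in>?C. level e)" "\<forall>x\<in>X. g x = f x"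
    using adh unfolding adherent_on_def by blast
  define e where "e = restrict g Y"
  have "e \<in> Y \<rightarrow>\<^sub>E B"
    using vals[OF g(1)] unfolding e_def by simp
  moreover have "\<forall>x\<in>X. e x = f x"
    using g(2) \<open>X \<subseteq> Y\<close> unfolding e_def by auto
  ultimately have e: "e \<in> ?C" by simp
  then have "level e \<le> (\<Sum>e\<in>?C. level e)"
    using \<open>finite ?C\<close> by (intro member_le_sum) auto
  then have "g \<in> A (level e)"
    using g(1) \<open>antimono A\<close> by (auto dest: antimonoD)
  then have "\<exists>y\<in>Y. g y \<noteq> e y"
    using level e by blast
  then show False
    unfolding e_def by simp
qed

lemma adherent_on_chain:
  fixes H :: "nat \<Rightarrow> 'x set"
  assumes fin: "\<And>M. finite (H M)" and "mono H" "finite B" "antimono A"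
    and nonempty: "\<And>n. A n \<noteq> {}"
    and vals: "\<And>n g M x. g \<in> A n \<Longrightarrow> x \<in> H M \<Longrightarrow> g x \<in> B"
  shows "\<exists>R. \<forall>M. adherent_on A (H M) (R M) \<and> (\<forall>x\<in>H M. R (Suc M) x = R M x)"
proof -
  have ext: "\<exists>f'. adherent_on A (H M) f' \<and> (\<forall>x\<in>X. f' x = f x)"
    if "adherent_on A X f" "X \<subseteq> H M" for X f M
    using adherent_on_extend[OF that fin[of M] \<open>finite B\<close> \<open>antimono A\<close>] vals by blast
  have "adherent_on A {} undefined"
    using nonempty unfolding adherent_on_def by blast
  then obtain f0 where f0: "adherent_on A (H 0) f0"
    using ext[of "{}" undefined 0] by blast
  define R where "R = rec_nat f0 (\<lambda>M f. SOME f'. adherent_on A (H (Suc M)) f' \<and> (\<forall>x\<in>H M. f' x = f x))"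
  have R_Suc: "adherent_on A (H (Suc M)) (R (Suc M)) \<and> (\<forall>x\<in>H M. R (Suc M) x = R M x)"
    if "adherent_on A (H M) (R M)" for M
  proof -
    have "H M \<subseteq> H (Suc M)"
      using \<open>mono H\<close> by (simp add: monoD)
    then have "\<exists>f'. adherent_on A (H (Suc M)) f' \<and> (\<forall>x\<in>H M. f' x = R M x)"
      by (rule ext[OF that])
    then have "adherent_on A (H (Suc M)) (SOME f'. adherent_on A (H (Suc M)) f' \<and> (\<forall>x\<in>H M. f' x = R M x))
      \<and> (\<forall>x\<in>H M. (SOME f'. adherent_on A (H (Suc M)) f' \<and> (\<forall>x\<in>H M. f' x = R M x)) x = R M x)"
      by (rule someI_ex)
    then show ?thesis
      by (simp add: R_def)
  qed
  have "adherent_on A (H M) (R M)" for M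
    by (induction M) (use f0 R_Suc in \<open>simp_all add: R_def\<close>)
  then show ?thesis
    using R_Suc by blast
qed

text \<open>Tychonoff's theorem for a countable product of finite sets (equivalently, Koenig's lemma).\<close>
lemma adherent_on_limit:
  fixes H :: "nat \<Rightarrow> 'x set"
  assumes "\<And>M. finite (H M)" and "mono H" "finite B" "antimono A"
    and "\<And>n. A n \<noteq> {}"
    and "\<And>n g M x. g \<in> A n \<Longrightarrow> x \<in> H M \<Longrightarrow> g x \<in> B"
  shows "\<exists>f. \<forall>M. adherent_on A (H M) f"
proof -
  have "\<exists>R. \<forall>M. adherent_on A (H M) (R M) \<and> (\<forall>x\<in>H M. R (Suc M) x = R M x)"
    by (rule adherent_on_chain) (fact assms)+
  then obtain R where R: "\<And>M. adherent_on A (H M) (R M)" "\<And>M x. x \<in> H M \<Longrightarrow> R (Suc M) x = R M x"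
    by blast
  have R_stable: "R M' x = R M x" if "x \<in> H M" "M \<le> M'" for x M M'
    using that(2)
  proof (induction M' rule: dec_induct)
    case (step M')
    then show ?case
      using R(2) that(1) monoD[OF \<open>mono H\<close> step(1)] by auto
  qed simp
  define f where "f x = R (LEAST M. x \<in> H M) x" for x
  have "f x = R M x" if "x \<in> H M" for x M
  proof -
    have "x \<in> H (LEAST M. x \<in> H M)" "(LEAST M. x \<in> H M) \<le> M"
      using that by (rule LeastI, rule Least_le)
    then show ?thesis
      unfolding f_def by (rule R_stable[symmetric])
  qed
  then have "adherent_on A (H M) f" for M
    using R(1)[of M] unfolding adherent_on_def by auto
  then show ?thesis by blast
qed

section \<open>Subgame perfect equilibria exist\<close>

definition horizon_cost :: "nat \<Rightarrow> 'a set \<Rightarrow> (nat \<Rightarrow> 'a) \<Rightarrow> enat" where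
  "horizon_cost L S \<rho> = (if cost S \<rho> < enat L then cost S \<rho> else \<infinity>)"

lemma horizon_cost_agree:
  assumes "\<forall>k<L. \<rho> k = \<rho>' k"
  shows "horizon_cost L S \<rho> = horizon_cost L S \<rho>'"
proof (cases "cost S \<rho> < enat L")
  case True
  then obtain k where "k < L" "\<rho> k \<in> S"
    unfolding cost_less_iff by blast
  then have "cost S \<rho> \<le> enat (L - 1)"
    unfolding cost_le_iff by (intro exI[of _ k]) simp
  moreover have "\<forall>j\<le>L - 1. \<rho> j = \<rho>' j"
    using assms \<open>k < L\<close> by auto
  ultimately have "cost S \<rho>' = cost S \<rho>"
    by (intro cost_eq_if_agree_upto) auto
  then show ?thesis
    unfolding horizon_cost_def by simp
next
  case False
  then have "\<not> cost S \<rho>' < enat L"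
    using assms unfolding cost_less_iff by auto
  then show ?thesis
    using False unfolding horizon_cost_def by simp
qed

locale finite_reach_game =
  fixes V :: "'a set" and E :: "('a \<times> 'a) set" and own :: "'a \<Rightarrow> 'p" and T :: "'p \<Rightarrow> 'a set"
  assumes finite_V: "finite V"
    and edges: "E \<subseteq> V \<times> V"
    and has_succ: "\<And>u. u \<in> V \<Longrightarrow> \<exists>w. (u, w) \<in> E"
begin

abbreviation "history \<equiv> is_history V E"
abbreviation "legal \<equiv> legal_profile V E own"

lemma arg_min_on_succ:
  fixes c :: "'a \<Rightarrow> 'b::linorder"
  assumes "u \<in> V"
  shows "(u, arg_min_on c {w. (u, w) \<in> E}) \<in> E"
    and "(u, w) \<in> E \<Longrightarrow> c (arg_min_on c {w. (u, w) \<in> E}) \<le> c w"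
proof -
  have "finite {w. (u, w) \<in> E}"
    using finite_V edges by (auto intro: finite_subset)
  moreover have "{w. (u, w) \<in> E} \<noteq> {}"
    using has_succ[OF assms] by blast
  ultimately show "(u, arg_min_on c {w. (u, w) \<in> E}) \<in> E"
    and "(u, w) \<in> E \<Longrightarrow> c (arg_min_on c {w. (u, w) \<in> E}) \<le> c w"
    using arg_min_if_finite[of "{w. (u, w) \<in> E}" c] by (auto simp: not_less)
qed

lemma history_snoc_edge:
  assumes "history g" "(last g, w) \<in> E"
  shows "history (g @ [w])"
proof -
  have "g \<noteq> []"
    using assms(1) by (simp add: is_history_def)
  then show ?thesis
    using assms edges by (auto simp: is_history_snoc)
qed

text \<open>Backward induction in the game truncated at horizon \<open>L\<close>: the player to move picks a
  successor minimising his truncated cost of the continuation, which \<open>bi_extend\<close> computes up to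
  length \<open>L\<close>. Reading that list as a play through \<open>(!)\<close> is harmless: the truncated cost only
  inspects indices below \<open>L\<close>.\<close>
primrec bi_extend :: "nat \<Rightarrow> nat \<Rightarrow> 'a list \<Rightarrow> 'a list" where
  "bi_extend L 0 g = g"
| "bi_extend L (Suc r) g = bi_extend L r (g @ [arg_min_on
     (\<lambda>w. horizon_cost L (T (own (last g))) ((!) (bi_extend L r (g @ [w])))) {w. (last g, w) \<in> E}])"

definition bi_strategy :: "nat \<Rightarrow> 'a list \<Rightarrow> 'a" where
  "bi_strategy L g = arg_min_on
     (\<lambda>w. horizon_cost L (T (own (last g))) ((!) (bi_extend L (L - Suc (length g)) (g @ [w]))))
     {w. (last g, w) \<in> E}"

lemma length_bi_extend [simp]: "length (bi_extend L r g) = length g + r"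
  by (induction r arbitrary: g) auto

lemma bi_extend_Suc: "length g + Suc r = L \<Longrightarrow> bi_extend L (Suc r) g = bi_extend L r (g @ [bi_strategy L g])"
  by (auto simp: bi_strategy_def)

lemma bi_strategy_legal: "history g \<Longrightarrow> (last g, bi_strategy L g) \<in> E"
  unfolding bi_strategy_def by (rule arg_min_on_succ(1)[OF last_in_V_if_is_history])

lemma legal_bi_strategy: "legal (\<lambda>i. bi_strategy L)"
  by (rule legal_profile_uniform) (rule bi_strategy_legal)

lemma outcome_after_bi_strategy:
  "history g \<Longrightarrow> length g + r = L \<Longrightarrow> k < L \<Longrightarrow> outcome_after own (\<lambda>i. bi_strategy L) g k = bi_extend L r g ! k"
proof (induction r arbitrary: g)
  case 0
  then show ?case by (simp add: outcome_after_hist)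
next
  case (Suc r)
  let ?w = "bi_strategy L g"
  have "history (g @ [?w])"
    using Suc.prems(1) by (intro history_snoc_edge bi_strategy_legal)
  then have "outcome_after own (\<lambda>i. bi_strategy L) (g @ [?w]) k = bi_extend L r (g @ [?w]) ! k"
    using Suc by simp
  moreover have "g \<noteq> []"
    using Suc.prems(1) by (simp add: is_history_def)
  moreover have "bi_extend L (Suc r) g = bi_extend L r (g @ [?w])"
    using Suc.prems(2) by (rule bi_extend_Suc)
  ultimately show ?case
    by (simp add: outcome_after_snoc)
qed

lemma bi_strategy_one_step_optimal:
  assumes g: "history g" and "length g < L" and w: "(last g, w) \<in> E"
  shows "horizon_cost L (T (own (last g))) (outcome_after own (\<lambda>i. bi_strategy L) g)
    \<le> horizon_cost L (T (own (last g))) (outcome_after own (\<lambda>i. bi_strategy L) (g @ [w]))"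
proof -
  define r where "r = L - Suc (length g)"
  let ?c = "\<lambda>w. horizon_cost L (T (own (last g))) ((!) (bi_extend L r (g @ [w])))"
  have cost_succ: "horizon_cost L (T (own (last g))) (outcome_after own (\<lambda>i. bi_strategy L) (g @ [w'])) = ?c w'"
    if "(last g, w') \<in> E" for w'
    using outcome_after_bi_strategy[OF history_snoc_edge[OF g that], of r L] \<open>length g < L\<close>
    by (intro horizon_cost_agree) (simp add: r_def)
  have "g \<noteq> []"
    using g by (simp add: is_history_def)
  then have "outcome_after own (\<lambda>i. bi_strategy L) g = outcome_after own (\<lambda>i. bi_strategy L) (g @ [bi_strategy L g])"
    by (simp add: outcome_after_snoc)
  moreover have "?c (bi_strategy L g) \<le> ?c w"
    unfolding bi_strategy_def r_def by (rule arg_min_on_succ(2)[OF last_in_V_if_is_history[OF g] w])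
  ultimately show ?thesis
    using cost_succ[OF w] cost_succ[OF bi_strategy_legal[OF g]] by simp
qed

lemma bi_strategy_horizon_NE_upto:
  assumes "history g" "length g + r = L" "legal \<sigma>"
    and others: "\<And>h. own (last h) \<noteq> i \<Longrightarrow> \<sigma> (own (last h)) h = bi_strategy L h"
  shows "horizon_cost L (T i) (outcome_after own (\<lambda>j. bi_strategy L) g)
    \<le> horizon_cost L (T i) (outcome_after own \<sigma> g)"
  using assms(1,2)
proof (induction r arbitrary: g)
  case 0
  then show ?case
    by (intro eq_refl horizon_cost_agree) (simp add: outcome_after_hist)
next
  case (Suc r)
  let ?s = "\<lambda>j. bi_strategy L" and ?w = "\<sigma> (own (last g)) g"
  have "g \<noteq> []"
    using Suc.prems(1) by (simp add: is_history_def)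
  have w: "(last g, ?w) \<in> E"
    using \<open>legal \<sigma>\<close> Suc.prems(1) by (simp add: legal_profile_def)
  have "outcome_after own \<sigma> (g @ [?w]) = outcome_after own \<sigma> g"
    using \<open>g \<noteq> []\<close> by (rule outcome_after_snoc) simp
  then have IH: "horizon_cost L (T i) (outcome_after own ?s (g @ [?w])) \<le> horizon_cost L (T i) (outcome_after own \<sigma> g)"
    using Suc.IH[OF history_snoc_edge[OF Suc.prems(1) w]] Suc.prems(2) by simp
  show ?case
  proof (cases "own (last g) = i")
    case True
    have "length g < L"
      using Suc.prems(2) by simp
    from bi_strategy_one_step_optimal[OF Suc.prems(1) this w]
    have "horizon_cost L (T i) (outcome_after own ?s g) \<le> horizon_cost L (T i) (outcome_after own ?s (g @ [?w]))"
      by (simp only: True)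
    then show ?thesis
      using IH by (rule order_trans)
  next
    case False
    then have "outcome_after own ?s (g @ [?w]) = outcome_after own ?s g"
      using \<open>g \<noteq> []\<close> others by (intro outcome_after_snoc) simp_all
    then show ?thesis
      using IH by simp
  qed
qed

lemma bi_strategy_horizon_NE:
  assumes "history g" and \<tau>: "is_strategy V own E i \<tau>"
  shows "horizon_cost L (T i) (outcome_after own (\<lambda>i. bi_strategy L) g)
    \<le> horizon_cost L (T i) (outcome_after own ((\<lambda>i. bi_strategy L)(i := \<tau>)) g)"
proof (cases "length g \<le> L")
  case True
  then show ?thesis
    using bi_strategy_horizon_NE_upto[OF assms(1) _ legal_profile_update[OF legal_bi_strategy \<tau>],
        of "L - length g"]
    by simp
next
  case False
  then show ?thesis
    by (intro eq_refl horizon_cost_agree) (simp add: outcome_after_hist)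
qed

definition histories_upto :: "nat \<Rightarrow> 'a list set" where
  "histories_upto M = {g. g \<noteq> [] \<and> set g \<subseteq> V \<and> length g \<le> M}"

lemma finite_histories_upto: "finite (histories_upto M)"
  unfolding histories_upto_def
  by (rule finite_subset[OF _ finite_lists_length_le[OF finite_V, of M]]) auto

text \<open>The limit of the backward-induction profiles as the horizon grows.\<close>
definition spe_strategy :: "'a list \<Rightarrow> 'a" where
  "spe_strategy = (SOME f. \<forall>M. adherent_on (\<lambda>n. bi_strategy ` {n..}) (histories_upto M) f)"

lemma spe_strategy_approx:
  "\<exists>D\<ge>n. \<forall>g. history g \<longrightarrow> length g \<le> M \<longrightarrow> bi_strategy D g = spe_strategy g"
proof -
  have "\<exists>f. \<forall>M. adherent_on (\<lambda>n. bi_strategy ` {n..}) (histories_upto M) f"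
  proof (rule adherent_on_limit[where B = V])
    show "mono histories_upto"
      by (rule monoI) (auto simp: histories_upto_def)
    show "antimono (\<lambda>n. bi_strategy ` {n..})"
      by (rule antimonoI) auto
    show "f g \<in> V" if "f \<in> bi_strategy ` {n..}" "g \<in> histories_upto M" for n f M g
    proof -
      have "last g \<in> V"
        using that(2) unfolding histories_upto_def by auto
      then show ?thesis
        using that(1) arg_min_on_succ(1) edges unfolding bi_strategy_def by blast
    qed
  qed (auto simp: finite_histories_upto finite_V)
  then have "adherent_on (\<lambda>n. bi_strategy ` {n..}) (histories_upto M) spe_strategy"
    unfolding spe_strategy_def by (rule someI2_ex) blast
  then obtain D where "D \<ge> n" "\<forall>g\<in>histories_upto M. bi_strategy D g = spe_strategy g"
    unfolding adherent_on_def by blast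
  moreover have "g \<in> histories_upto M" if "history g" "length g \<le> M" for g
    using that by (simp add: histories_upto_def is_history_def)
  ultimately show ?thesis
    by blast
qed

lemma spe_strategy_legal:
  assumes "history g"
  shows "(last g, spe_strategy g) \<in> E"
proof -
  obtain D where "bi_strategy D g = spe_strategy g"
    using spe_strategy_approx[of 0 "length g"] assms by blast
  then show ?thesis
    using bi_strategy_legal[OF assms, of D] by simp
qed

lemma legal_spe_strategy: "legal (\<lambda>i. spe_strategy)"
  by (rule legal_profile_uniform) (rule spe_strategy_legal)

lemma spe_strategy_approx_outcomes:
  assumes g: "history g" and \<tau>: "is_strategy V own E i \<tau>"
  obtains D where "t < D"
    and "\<And>k. k \<le> t \<Longrightarrow> outcome_after own (\<lambda>i. spe_strategy) g k = outcome_after own (\<lambda>i. bi_strategy D) g k"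
    and "\<And>k. k \<le> t \<Longrightarrow> outcome_after own ((\<lambda>i. spe_strategy)(i := \<tau>)) g k
      = outcome_after own ((\<lambda>i. bi_strategy D)(i := \<tau>)) g k"
proof -
  define M where "M = max (Suc t) (length g)"
  obtain D where "D \<ge> M" and D: "\<And>h. history h \<Longrightarrow> length h \<le> M \<Longrightarrow> bi_strategy D h = spe_strategy h"
    using spe_strategy_approx by blast
  have agree: "outcome_after own \<sigma> g k = outcome_after own \<sigma>' g k"
    if "legal \<sigma>" "\<And>h. history h \<Longrightarrow> length h < M \<Longrightarrow> \<sigma> (own (last h)) h = \<sigma>' (own (last h)) h" "k \<le> t"
    for \<sigma> \<sigma>' k
    using outcome_after_agree[where M = M and \<sigma>' = \<sigma>', OF edges that(1) g that(2)] that(3) unfolding M_def by simp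
  show ?thesis
  proof (rule that)
    show "t < D"
      using \<open>D \<ge> M\<close> by (simp add: M_def)
    show "outcome_after own (\<lambda>i. spe_strategy) g k = outcome_after own (\<lambda>i. bi_strategy D) g k" if "k \<le> t" for k
      using D by (intro agree[OF legal_spe_strategy _ that]) simp
    show "outcome_after own ((\<lambda>i. spe_strategy)(i := \<tau>)) g k = outcome_after own ((\<lambda>i. bi_strategy D)(i := \<tau>)) g k"
      if "k \<le> t" for k
      using D by (intro agree[OF legal_profile_update[OF legal_spe_strategy \<tau>] _ that]) simp
  qed
qed

theorem spe_strategy_NE:
  assumes g: "history g" and \<tau>: "is_strategy V own E i \<tau>"
  shows "cost (T i) (outcome_after own (\<lambda>i. spe_strategy) g)
    \<le> cost (T i) (outcome_after own ((\<lambda>i. spe_strategy)(i := \<tau>)) g)"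
proof (cases "cost (T i) (outcome_after own ((\<lambda>i. spe_strategy)(i := \<tau>)) g)")
  case (enat t)
  let ?s = "\<lambda>i. spe_strategy" and ?s' = "(\<lambda>i. spe_strategy)(i := \<tau>)"
  obtain D where "t < D"
    and same: "\<And>k. k \<le> t \<Longrightarrow> outcome_after own ?s g k = outcome_after own (\<lambda>i. bi_strategy D) g k"
    and same': "\<And>k. k \<le> t \<Longrightarrow> outcome_after own ?s' g k = outcome_after own ((\<lambda>i. bi_strategy D)(i := \<tau>)) g k"
    using spe_strategy_approx_outcomes[OF g \<tau>] by blast
  have "cost (T i) (outcome_after own ((\<lambda>i. bi_strategy D)(i := \<tau>)) g) = enat t"
    using cost_eq_if_agree_upto[of t "outcome_after own ?s' g"] same' enat by simp
  then have "horizon_cost D (T i) (outcome_after own ((\<lambda>i. bi_strategy D)(i := \<tau>)) g) = enat t"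
    using \<open>t < D\<close> by (simp add: horizon_cost_def)
  then have "horizon_cost D (T i) (outcome_after own (\<lambda>i. bi_strategy D) g) \<le> enat t"
    using bi_strategy_horizon_NE[OF g \<tau>, of D] by simp
  then have "cost (T i) (outcome_after own (\<lambda>i. bi_strategy D) g) \<le> enat t"
    unfolding horizon_cost_def by (auto split: if_splits)
  then have "cost (T i) (outcome_after own ?s g) \<le> enat t"
    using same unfolding cost_le_iff by auto
  then show ?thesis
    using enat by simp
qed simp

end

section \<open>Consistent plays\<close>

definition consistent_plays :: "'a set \<Rightarrow> ('a \<times> 'a) set \<Rightarrow> ('a \<Rightarrow> 'p) \<Rightarrow> ('p \<Rightarrow> 'a set)
    \<Rightarrow> ('a \<Rightarrow> enat) \<Rightarrow> 'a \<Rightarrow> (nat \<Rightarrow> 'a) set" where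
  "consistent_plays V E own T lam u = {\<rho>. is_play V E \<rho> \<and> \<rho> 0 = u \<and>
     (\<forall>n. cost (T (own (\<rho> n))) (suffix_from n \<rho>) \<le> lam (\<rho> n))}"

lemma Lam_eq_consistent_plays:
  "Lam Pl V own E F lam u = consistent_plays (VertX V Pl) (EdgX Pl E F) (ownX own) (FX V Pl) lam u"
  unfolding Lam_def consistent_plays_def by simp

lemma consistent_plays_suffix_from:
  "\<rho> \<in> consistent_plays V E own T lam u \<Longrightarrow> suffix_from m \<rho> \<in> consistent_plays V E own T lam (\<rho> m)"
  unfolding consistent_plays_def is_play_def by (simp add: add.assoc)

lemma consistent_plays_cost_le:
  assumes "\<rho> \<in> consistent_plays V E own T lam u"
  shows "cost (T (own u)) \<rho> \<le> lam u"
proof -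
  have "cost (T (own (\<rho> 0))) (suffix_from 0 \<rho>) \<le> lam (\<rho> 0)" "\<rho> 0 = u"
    using assms unfolding consistent_plays_def by blast+
  then show ?thesis by simp
qed

lemma consistent_plays_closed:
  assumes approx: "\<And>n. \<exists>\<rho>'\<in>consistent_plays V E own T lam u. \<forall>k\<le>n. \<rho>' k = \<rho> k"
  shows "\<rho> \<in> consistent_plays V E own T lam u"
proof -
  have "\<rho> k \<in> V \<and> (\<rho> k, \<rho> (Suc k)) \<in> E" for k
  proof -
    obtain \<rho>' where \<rho>': "\<rho>' \<in> consistent_plays V E own T lam u" "\<forall>j\<le>Suc k. \<rho>' j = \<rho> j"
      using approx by blast
    then have "\<rho>' k \<in> V \<and> (\<rho>' k, \<rho>' (Suc k)) \<in> E"
      unfolding consistent_plays_def is_play_def by blast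
    moreover have "\<rho>' k = \<rho> k" "\<rho>' (Suc k) = \<rho> (Suc k)"
      using \<rho>'(2) by simp_all
    ultimately show ?thesis
      by simp
  qed
  moreover have "\<rho> 0 = u"
    using approx[of 0] unfolding consistent_plays_def by auto
  moreover have "cost (T (own (\<rho> m))) (suffix_from m \<rho>) \<le> lam (\<rho> m)" for m
  proof (cases "lam (\<rho> m)")
    case (enat c)
    obtain \<rho>' where \<rho>': "\<rho>' \<in> consistent_plays V E own T lam u" "\<forall>k\<le>m + c. \<rho>' k = \<rho> k"
      using approx by blast
    have "cost (T (own (\<rho>' m))) (suffix_from m \<rho>') \<le> lam (\<rho>' m)"
      using \<rho>'(1) unfolding consistent_plays_def by blast
    moreover have "\<rho>' m = \<rho> m"
      using \<rho>'(2) by simp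
    ultimately have "cost (T (own (\<rho> m))) (suffix_from m \<rho>') \<le> enat c"
      using enat by simp
    then have "cost (T (own (\<rho> m))) (suffix_from m \<rho>) \<le> enat c"
      using \<rho>'(2) unfolding cost_le_iff by auto
    then show ?thesis
      using enat by simp
  qed simp
  ultimately show ?thesis
    unfolding consistent_plays_def is_play_def by blast
qed

context finite_reach_game
begin

abbreviation "cplays \<equiv> consistent_plays V E own T"

lemma consistent_plays_cost_infinity:
  assumes unbounded: "\<And>n. \<exists>\<rho>\<in>cplays lam u. enat n \<le> cost (T i) \<rho>"
  shows "\<exists>\<rho>\<in>cplays lam u. cost (T i) \<rho> = \<infinity>"
proof -
  define A where "A n = {\<rho>\<in>cplays lam u. enat n \<le> cost (T i) \<rho>}" for n
  have "\<exists>\<rho>. \<forall>n. adherent_on A {..n} \<rho>"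
  proof (rule adherent_on_limit[where B = V])
    show "antimono A"
    proof (rule antimonoI)
      fix m n :: nat
      assume "m \<le> n"
      then have "enat m \<le> enat n" by simp
      then show "A n \<le> A m"
        unfolding A_def using order_trans by blast
    qed
    show "\<rho> k \<in> V" if "\<rho> \<in> A n" for n \<rho> k
      using that unfolding A_def consistent_plays_def is_play_def by blast
  qed (use unbounded in \<open>auto simp: A_def finite_V mono_def\<close>)
  then obtain \<rho> where adh: "\<And>n. adherent_on A {..n} \<rho>"
    by blast
  have \<rho>: "\<exists>\<rho>'\<in>A n. \<forall>k\<le>n. \<rho>' k = \<rho> k" for n
  proof -
    obtain \<rho>' where "\<rho>' \<in> A n" "\<forall>k\<in>{..n}. \<rho>' k = \<rho> k"
      using adh[of n] unfolding adherent_on_def by blast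
    then show ?thesis by auto
  qed
  then have "\<rho> \<in> cplays lam u"
    unfolding A_def by (intro consistent_plays_closed) blast
  moreover have "\<rho> t \<notin> T i" for t
  proof
    assume "\<rho> t \<in> T i"
    obtain \<rho>' where "\<rho>' \<in> A (Suc t)" "\<forall>k\<le>Suc t. \<rho>' k = \<rho> k"
      using \<rho> by blast
    then have "cost (T i) \<rho>' \<le> enat t" "enat (Suc t) \<le> cost (T i) \<rho>'"
      using \<open>\<rho> t \<in> T i\<close> unfolding A_def cost_le_iff by auto
    then show False
      using order_trans[of "enat (Suc t)"] by fastforce
  qed
  ultimately show ?thesis
    unfolding cost_eq_infinity_iff by blast
qed

lemma SUP_cost_attained:
  assumes "cplays lam u \<noteq> {}"
  shows "\<exists>\<rho>\<in>cplays lam u. cost (T i) \<rho> = (SUP \<rho>\<in>cplays lam u. cost (T i) \<rho>)"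
proof (cases "finite ((\<lambda>\<rho>. cost (T i) \<rho>) ` cplays lam u)")
  case True
  then have "Max ((\<lambda>\<rho>. cost (T i) \<rho>) ` cplays lam u) \<in> (\<lambda>\<rho>. cost (T i) \<rho>) ` cplays lam u"
    using assms by (intro Max_in) auto
  then obtain \<rho> where "\<rho> \<in> cplays lam u" "cost (T i) \<rho> = Max ((\<lambda>\<rho>. cost (T i) \<rho>) ` cplays lam u)"
    by (auto simp: image_iff)
  then show ?thesis
    using True assms unfolding Sup_enat_def by auto
next
  case False
  have "\<exists>\<rho>\<in>cplays lam u. enat n \<le> cost (T i) \<rho>" for n
  proof (rule ccontr)
    assume "\<not> ?thesis"
    then have "finite ((\<lambda>\<rho>. cost (T i) \<rho>) ` cplays lam u)"
      by (intro finite_enat_bounded[of _ n]) auto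
    then show False
      using False by blast
  qed
  then show ?thesis
    using consistent_plays_cost_infinity False unfolding Sup_enat_def by auto
qed

end

locale persistent_reach_game = finite_reach_game +
  assumes persistent: "\<And>u w i. (u, w) \<in> E \<Longrightarrow> u \<in> T i \<Longrightarrow> w \<in> T i"
begin

lemma play_stays_in_target:
  assumes "is_play V E \<rho>" "a \<le> b" "\<rho> a \<in> T i"
  shows "\<rho> b \<in> T i"
  using assms(2)
proof (induction b rule: dec_induct)
  case (step b)
  then show ?case
    using assms(1) persistent unfolding is_play_def by blast
qed (use assms(3) in simp)

definition spe_play :: "'a list \<Rightarrow> nat \<Rightarrow> 'a" where
  "spe_play g = suffix_from (length g - 1) (outcome_after own (\<lambda>i. spe_strategy) g)"

lemma spe_play_0: "g \<noteq> [] \<Longrightarrow> spe_play g 0 = last g"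
  unfolding spe_play_def using outcome_after_last[of g] by simp

lemma is_play_spe_play: "history g \<Longrightarrow> is_play V E (spe_play g)"
  using is_play_outcome_after[OF edges legal_spe_strategy] unfolding spe_play_def is_play_def by simp

lemma suffix_from_spe_play:
  "g \<noteq> [] \<Longrightarrow> suffix_from n (spe_play g) = spe_play (extend_hist own (\<lambda>i. spe_strategy) g n)"
  by (cases g) (auto simp: spe_play_def outcome_after_extend_hist)

text \<open>Targets are never left, so a history ending outside \<open>T j\<close> has not visited \<open>T j\<close>.\<close>
lemma cost_outcome_after:
  assumes "legal \<sigma>" "history g" "last g \<notin> T j"
  shows "cost (T j) (outcome_after own \<sigma> g)
    = enat (length g - 1) + cost (T j) (suffix_from (length g - 1) (outcome_after own \<sigma> g))"
proof (rule cost_suffix_from, intro allI impI notI)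
  fix k
  assume "k < length g - 1" "outcome_after own \<sigma> g k \<in> T j"
  then have "outcome_after own \<sigma> g (length g - 1) \<in> T j"
    using play_stays_in_target[OF is_play_outcome_after[OF edges assms(1,2)], of k "length g - 1" j]
    by simp
  then show False
    using outcome_after_last[of g own \<sigma>] assms(2,3) by (simp add: is_history_def)
qed

text \<open>The equilibrium property against the deviation that moves to \<open>w\<close> at \<open>g\<close> and conforms
  afterwards.\<close>
lemma spe_play_cost_le:
  assumes g: "history g" and nt: "last g \<notin> T (own (last g))" and w: "(last g, w) \<in> E"
  shows "cost (T (own (last g))) (spe_play g) \<le> 1 + cost (T (own (last g))) (spe_play (g @ [w]))"
proof -
  let ?j = "own (last g)" and ?s = "\<lambda>i. spe_strategy"
  define \<tau> where "\<tau> h = (if h = g then w else spe_strategy h)" for h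
  define \<pi> where "\<pi> = suffix_from (length g - 1) (outcome_after own ?s (g @ [w]))"
  have "g \<noteq> []"
    using g by (simp add: is_history_def)
  have \<tau>: "is_strategy V own E ?j \<tau>"
    unfolding is_strategy_def \<tau>_def using w spe_strategy_legal by auto
  have "outcome_after own (?s(?j := \<tau>)) g = outcome_after own ?s (g @ [w])"
    by (rule outcome_after_one_deviation) (auto simp: \<tau>_def \<open>g \<noteq> []\<close>)
  then have deviation: "cost (T ?j) (outcome_after own (?s(?j := \<tau>)) g) = enat (length g - 1) + cost (T ?j) \<pi>"
    using cost_outcome_after[OF legal_profile_update[OF legal_spe_strategy \<tau>] g nt] by (simp add: \<pi>_def)
  have "cost (T ?j) (outcome_after own ?s g) = enat (length g - 1) + cost (T ?j) (spe_play g)"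
    using cost_outcome_after[OF legal_spe_strategy g nt] by (simp add: spe_play_def)
  with spe_strategy_NE[OF g \<tau>]
  have "enat (length g - 1) + cost (T ?j) (spe_play g) \<le> enat (length g - 1) + cost (T ?j) \<pi>"
    unfolding deviation by simp
  then have "cost (T ?j) (spe_play g) \<le> cost (T ?j) \<pi>"
    by simp
  moreover have "\<pi> 0 = last g"
    using \<open>g \<noteq> []\<close> by (simp add: \<pi>_def outcome_after_hist nth_append last_conv_nth)
  moreover have "suffix_from 1 \<pi> = spe_play (g @ [w])"
    using \<open>g \<noteq> []\<close> by (simp add: \<pi>_def spe_play_def)
  ultimately show ?thesis
    using cost_Suc[of \<pi> "T ?j"] nt by simp
qed

lemma spe_play_cost_le_SUP:
  assumes "history g" "last g \<notin> T (own (last g))" "(last g, w) \<in> E"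
    and "spe_play (g @ [w]) \<in> cplays lam w"
  shows "cost (T (own (last g))) (spe_play g) \<le> 1 + (SUP \<rho>\<in>cplays lam w. cost (T (own (last g))) \<rho>)"
proof -
  have "cost (T (own (last g))) (spe_play g) \<le> 1 + cost (T (own (last g))) (spe_play (g @ [w]))"
    by (rule spe_play_cost_le[OF assms(1-3)])
  also have "\<dots> \<le> 1 + (SUP \<rho>\<in>cplays lam w. cost (T (own (last g))) \<rho>)"
    using assms(4) by (intro add_left_mono SUP_upper)
  finally show ?thesis .
qed

lemma spe_play_consistent:
  assumes "history g"
    and bound: "\<And>h. history h \<Longrightarrow> cost (T (own (last h))) (spe_play h) \<le> lam (last h)"
  shows "spe_play g \<in> cplays lam (last g)"
proof -
  have "g \<noteq> []"
    using assms(1) by (simp add: is_history_def)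
  have "cost (T (own (spe_play g m))) (suffix_from m (spe_play g)) \<le> lam (spe_play g m)" for m
  proof -
    let ?h = "extend_hist own (\<lambda>i. spe_strategy) g m"
    have "history ?h"
      by (rule is_history_extend_hist[OF edges legal_spe_strategy assms(1)])
    moreover have "spe_play g m = spe_play ?h 0"
      using fun_cong[OF suffix_from_spe_play[OF \<open>g \<noteq> []\<close>, of m], of 0] by simp
    then have "last ?h = spe_play g m"
      using spe_play_0[of ?h] \<open>g \<noteq> []\<close> by simp
    ultimately show ?thesis
      using bound[of ?h] suffix_from_spe_play[OF \<open>g \<noteq> []\<close>] by simp
  qed
  then show ?thesis
    using is_play_spe_play[OF assms(1)] spe_play_0[OF \<open>g \<noteq> []\<close>] unfolding consistent_plays_def by blast
qed

end

section \<open>Punishing deviations\<close>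

text \<open>The two properties of \<open>\<lambda>\<^sup>*\<close> that the construction uses: \<open>\<Lambda>\<^sup>*(w)\<close> is nonempty, and the
  fixpoint inequality for vertices outside their owner's target.\<close>
locale stable_labelling = finite_reach_game +
  fixes lam :: "'a \<Rightarrow> enat" and u0 :: 'a and \<rho>0 :: "nat \<Rightarrow> 'a"
  assumes u0_in_V: "u0 \<in> V"
    and consistent_plays_nonempty: "\<And>w. (u0, w) \<in> E\<^sup>* \<Longrightarrow> cplays lam w \<noteq> {}"
    and lam_le_succ: "\<And>u w. (u0, u) \<in> E\<^sup>* \<Longrightarrow> u \<notin> T (own u) \<Longrightarrow> (u, w) \<in> E \<Longrightarrow>
         lam u \<le> 1 + (SUP \<rho>\<in>cplays lam w. cost (T (own u)) \<rho>)"
    and \<rho>0: "\<rho>0 \<in> cplays lam u0"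
begin

definition worst_play :: "'a \<Rightarrow> 'a \<Rightarrow> nat \<Rightarrow> 'a" where
  "worst_play u w = (SOME \<rho>. \<rho> \<in> cplays lam w \<and> cost (T (own u)) \<rho> = (SUP \<rho>\<in>cplays lam w. cost (T (own u)) \<rho>))"

lemma worst_play:
  assumes "(u0, w) \<in> E\<^sup>*"
  shows "worst_play u w \<in> cplays lam w"
    and "cost (T (own u)) (worst_play u w) = (SUP \<rho>\<in>cplays lam w. cost (T (own u)) \<rho>)"
proof -
  have "\<exists>\<rho>. \<rho> \<in> cplays lam w \<and> cost (T (own u)) \<rho> = (SUP \<rho>\<in>cplays lam w. cost (T (own u)) \<rho>)"
    using SUP_cost_attained[OF consistent_plays_nonempty[OF assms]] by blast
  from someI_ex[OF this] show "worst_play u w \<in> cplays lam w"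
    and "cost (T (own u)) (worst_play u w) = (SUP \<rho>\<in>cplays lam w. cost (T (own u)) \<rho>)"
    unfolding worst_play_def by blast+
qed

lemma cost_le_worst_play:
  assumes "(u0, u) \<in> E\<^sup>*" "(u, w) \<in> E" "\<pi> \<in> cplays lam u" "u \<notin> T (own u)"
  shows "cost (T (own u)) \<pi> \<le> 1 + cost (T (own u)) (worst_play u w)"
  using consistent_plays_cost_le[OF assms(3)] lam_le_succ[OF assms(1,4,2)]
    worst_play(2)[OF rtrancl_into_rtrancl[OF assms(1,2)]] by simp

text \<open>The plan after a history is the continuation the profile intends to follow. \<open>plan_rev\<close>
  works on the reversed history, so that the plan after \<open>g @ [w]\<close> is obtained from the plan
  after \<open>g\<close>.\<close>
definition next_plan :: "(nat \<Rightarrow> 'a) \<Rightarrow> 'a \<Rightarrow> 'a \<Rightarrow> nat \<Rightarrow> 'a" where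
  "next_plan \<pi> u w = (if w = \<pi> 1 then suffix_from 1 \<pi> else worst_play u w)"

fun plan_rev :: "'a list \<Rightarrow> nat \<Rightarrow> 'a" where
  "plan_rev [] = \<rho>0"
| "plan_rev [u] = \<rho>0"
| "plan_rev (w # u # r) = next_plan (plan_rev (u # r)) u w"

definition plan :: "'a list \<Rightarrow> nat \<Rightarrow> 'a" where
  "plan g = plan_rev (rev g)"

lemma plan_single [simp]: "plan [u] = \<rho>0"
  by (simp add: plan_def)

lemma plan_snoc: "g \<noteq> [] \<Longrightarrow> plan (g @ [w]) = next_plan (plan g) (last g) w"
  by (cases "rev g") (auto simp: plan_def)

lemma plan_consistent:
  "history g \<Longrightarrow> hd g = u0 \<Longrightarrow> (u0, last g) \<in> E\<^sup>* \<and> plan g \<in> cplays lam (last g)"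
proof (induction g rule: rev_induct)
  case (snoc w g)
  show ?case
  proof (cases "g = []")
    case True
    then show ?thesis using snoc.prems \<rho>0 by simp
  next
    case False
    then have "history g" "(last g, w) \<in> E" "hd g = u0"
      using snoc.prems by (auto simp: is_history_snoc)
    then have IH: "(u0, last g) \<in> E\<^sup>*" "plan g \<in> cplays lam (last g)"
      using snoc.IH by auto
    have "plan (g @ [w]) \<in> cplays lam w"
    proof (cases "w = plan g 1")
      case True
      then show ?thesis
        using consistent_plays_suffix_from[OF IH(2), of 1] False by (simp add: plan_snoc next_plan_def)
    next
      case False
      then show ?thesis
        using worst_play(1) \<open>(last g, w) \<in> E\<close> IH(1) \<open>g \<noteq> []\<close>
        by (simp add: plan_snoc next_plan_def rtrancl_into_rtrancl)
    qed
    then show ?thesis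
      using IH(1) \<open>(last g, w) \<in> E\<close> by (simp add: rtrancl_into_rtrancl)
  qed
qed (simp add: is_history_def)

lemma plan_0: "history g \<Longrightarrow> hd g = u0 \<Longrightarrow> plan g 0 = last g"
  using plan_consistent by (simp add: consistent_plays_def)

definition punishing_strategy :: "'a list \<Rightarrow> 'a" where
  "punishing_strategy g = (if history g \<and> hd g = u0 then plan g 1 else SOME w. (last g, w) \<in> E)"

lemma punishing_strategy_legal:
  assumes "history g"
  shows "(last g, punishing_strategy g) \<in> E"
proof (cases "hd g = u0")
  case True
  then have "plan g \<in> cplays lam (last g)" "plan g 0 = last g"
    using assms plan_consistent plan_0 by blast+
  then have "(plan g 0, plan g (Suc 0)) \<in> E"
    unfolding consistent_plays_def is_play_def by blast
  then show ?thesis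
    using assms True \<open>plan g 0 = last g\<close> by (simp add: punishing_strategy_def)
next
  case False
  have "\<exists>w. (last g, w) \<in> E"
    using has_succ[OF last_in_V_if_is_history[OF assms]] .
  then have "(last g, SOME w. (last g, w) \<in> E) \<in> E"
    by (rule someI_ex)
  then show ?thesis
    using False by (simp add: punishing_strategy_def)
qed

lemma legal_punishing_strategy: "legal (\<lambda>i. punishing_strategy)"
  by (rule legal_profile_uniform) (rule punishing_strategy_legal)

lemma plan_extend_hist:
  assumes "history g" "hd g = u0"
  shows "plan (extend_hist own (\<lambda>i. punishing_strategy) g n) = suffix_from n (plan g)"
proof (induction n)
  case (Suc n)
  let ?h = "extend_hist own (\<lambda>i. punishing_strategy) g n"
  have "g \<noteq> []"
    using assms(1) by (simp add: is_history_def)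
  have "history ?h" "hd ?h = u0"
    using is_history_extend_hist[OF edges legal_punishing_strategy assms(1)] assms \<open>g \<noteq> []\<close> by simp_all
  then have "punishing_strategy ?h = plan ?h 1"
    by (simp add: punishing_strategy_def)
  then show ?case
    using Suc \<open>g \<noteq> []\<close> by (simp add: plan_snoc next_plan_def)
qed simp

lemma outcome_after_punishing_strategy:
  assumes "history g" "hd g = u0"
  shows "outcome_after own (\<lambda>i. punishing_strategy) g (length g - 1 + n) = plan g n"
proof -
  let ?h = "extend_hist own (\<lambda>i. punishing_strategy) g n"
  have "g \<noteq> []"
    using assms(1) by (simp add: is_history_def)
  have "history ?h" "hd ?h = u0"
    using is_history_extend_hist[OF edges legal_punishing_strategy assms(1)] assms \<open>g \<noteq> []\<close> by simp_all
  then have "last ?h = plan g n"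
    using plan_0[of ?h] plan_extend_hist[OF assms] by simp
  then show ?thesis
    using last_extend_hist[OF \<open>g \<noteq> []\<close>, of own "\<lambda>i. punishing_strategy" n] by simp
qed

lemma outcome_punishing_strategy: "outcome_after own (\<lambda>i. punishing_strategy) [u0] = \<rho>0"
  using outcome_after_punishing_strategy[of "[u0]"] u0_in_V by auto

lemma plan_cost_le_snoc:
  assumes h: "history h" "hd h = u0" and "legal \<sigma>"
    and others: "\<And>h. history h \<Longrightarrow> own (last h) \<noteq> i \<Longrightarrow> \<sigma> (own (last h)) h = punishing_strategy h"
    and "last h \<notin> T i"
  shows "cost (T i) (plan h) \<le> 1 + cost (T i) (plan (h @ [\<sigma> (own (last h)) h]))"
proof -
  let ?x = "\<sigma> (own (last h)) h"
  have "h \<noteq> []"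
    using h(1) by (simp add: is_history_def)
  have edge: "(last h, ?x) \<in> E"
    using \<open>legal \<sigma>\<close> h(1) by (simp add: legal_profile_def)
  have plan_0: "plan h 0 = last h" and consistent: "plan h \<in> cplays lam (last h)" "(u0, last h) \<in> E\<^sup>*"
    using plan_0 plan_consistent h by blast+
  show ?thesis
  proof (cases "?x = plan h 1")
    case True
    then show ?thesis
      using plan_0 \<open>last h \<notin> T i\<close> \<open>h \<noteq> []\<close> by (simp add: cost_Suc plan_snoc next_plan_def)
  next
    case False
    have "own (last h) = i"
    proof (rule ccontr)
      assume "own (last h) \<noteq> i"
      then have "?x = punishing_strategy h"
        by (rule others[OF h(1)])
      also have "\<dots> = plan h 1"
        using h by (simp add: punishing_strategy_def)
      finally show False
        using False by simp
    qed
    then show ?thesis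
      using cost_le_worst_play[OF consistent(2) edge consistent(1)] \<open>last h \<notin> T i\<close> False \<open>h \<noteq> []\<close>
      by (simp add: plan_snoc next_plan_def)
  qed
qed

lemma plan_cost_le:
  assumes "history h" "hd h = u0" and "legal \<sigma>"
    and others: "\<And>h. history h \<Longrightarrow> own (last h) \<noteq> i \<Longrightarrow> \<sigma> (own (last h)) h = punishing_strategy h"
    and "last (extend_hist own \<sigma> h d) \<in> T i"
  shows "cost (T i) (plan h) \<le> enat d"
  using assms(1,2,5)
proof (induction d arbitrary: h)
  case 0
  then show ?case
    using plan_0 by (simp add: cost_eq_0)
next
  case (Suc d)
  let ?x = "\<sigma> (own (last h)) h"
  have "h \<noteq> []"
    using Suc.prems(1) by (simp add: is_history_def)
  have edge: "(last h, ?x) \<in> E"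
    using \<open>legal \<sigma>\<close> Suc.prems(1) by (simp add: legal_profile_def)
  have "extend_hist own \<sigma> (h @ [?x]) d = extend_hist own \<sigma> h (Suc d)"
    using extend_hist_add[of own \<sigma> h 1 d] by simp
  then have IH: "cost (T i) (plan (h @ [?x])) \<le> enat d"
    using Suc.IH[OF history_snoc_edge[OF Suc.prems(1) edge]] Suc.prems(2,3) \<open>h \<noteq> []\<close> by simp
  show ?case
  proof (cases "last h \<in> T i")
    case True
    then show ?thesis
      using plan_0 Suc.prems(1,2) by (simp add: cost_eq_0)
  next
    case False
    have "cost (T i) (plan h) \<le> 1 + cost (T i) (plan (h @ [?x]))"
      by (rule plan_cost_le_snoc[OF Suc.prems(1,2) \<open>legal \<sigma>\<close> others False])
    also have "\<dots> \<le> enat (Suc d)"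
      using IH by (simp add: plus_1_eSuc eSuc_enat[symmetric])
    finally show ?thesis .
  qed
qed

theorem punishing_strategy_NE:
  assumes "history g" "hd g = u0" and \<tau>: "is_strategy V own E i \<tau>"
  shows "cost (T i) (outcome_after own (\<lambda>j. punishing_strategy) g)
    \<le> cost (T i) (outcome_after own ((\<lambda>j. punishing_strategy)(i := \<tau>)) g)"
proof (cases "cost (T i) (outcome_after own ((\<lambda>j. punishing_strategy)(i := \<tau>)) g)")
  case (enat t)
  let ?\<rho> = "outcome_after own (\<lambda>j. punishing_strategy) g"
  have hit: "outcome_after own ((\<lambda>j. punishing_strategy)(i := \<tau>)) g t \<in> T i"
    using enat unfolding cost_eq_enat_iff by blast
  have "\<exists>k\<le>t. ?\<rho> k \<in> T i"
  proof (cases "t < length g - 1")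
    case True
    then show ?thesis
      using hit by (auto simp: outcome_after_hist)
  next
    case False
    then obtain d where t: "t = length g - 1 + d"
      using le_Suc_ex not_less by blast
    moreover have "g \<noteq> []"
      using assms(1) by (simp add: is_history_def)
    ultimately have "cost (T i) (plan g) \<le> enat d"
      using plan_cost_le[OF assms(1,2) legal_profile_update[OF legal_punishing_strategy \<tau>]] hit
      by (simp add: last_extend_hist)
    then obtain k where "k \<le> d" "plan g k \<in> T i"
      unfolding cost_le_iff by blast
    then show ?thesis
      using outcome_after_punishing_strategy[OF assms(1,2), of k] t by (intro exI[of _ "length g - 1 + k"]) simp
  qed
  then show ?thesis
    using enat unfolding cost_le_iff[symmetric] by simp
qed simp

end

section \<open>The labelling sequence of the extended game\<close>

lemma enat_antitone_eventually_const:
  fixes f :: "nat \<Rightarrow> enat"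
  assumes "\<And>k. f (Suc k) \<le> f k"
  shows "\<exists>K. \<forall>k\<ge>K. f k = f K"
proof -
  obtain K where K: "f K = (LEAST x. x \<in> range f)"
    using LeastI[of "\<lambda>x. x \<in> range f" "f 0"] by auto
  have "f k = f K" if "K \<le> k" for k
    using lift_Suc_antimono_le[of f, OF assms that] Least_le[of "\<lambda>x. x \<in> range f" "f k"] K by simp
  then show ?thesis by blast
qed

lemma enat_INF_attained:
  fixes f :: "'a \<Rightarrow> enat"
  assumes "S \<noteq> {}"
  shows "\<exists>x\<in>S. (INF x\<in>S. f x) = f x"
proof -
  have "(LEAST y. y \<in> f ` S) \<in> f ` S"
    using assms by (metis LeastI ex_in_conv imageI)
  then show ?thesis
    using assms unfolding Inf_enat_def by auto
qed

locale extended_game =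
  fixes Pl :: "'p set" and V :: "'v set" and own :: "'v \<Rightarrow> 'p" and E :: "('v \<times> 'v) set"
    and F :: "'p \<Rightarrow> 'v set" and v0 :: 'v and J :: "nat \<Rightarrow> 'p set"
  assumes arena: "arena Pl V own E"
    and v0_in_V: "v0 \<in> V"
    and order: "admissible_order Pl E F v0 J"
begin

abbreviation "V\<^sub>X \<equiv> VertX V Pl"
abbreviation "E\<^sub>X \<equiv> EdgX Pl E F"
abbreviation "own\<^sub>X \<equiv> ownX own"
abbreviation "T\<^sub>X \<equiv> FX V Pl"
abbreviation "N \<equiv> card (calI Pl E F v0)"
abbreviation "update \<equiv> lam_update Pl V own E F J N"

lemma EX_subset: "E\<^sub>X \<subseteq> V\<^sub>X \<times> V\<^sub>X"
  using arena unfolding EdgX_def VertX_def arena_def by auto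

sublocale persistent_reach_game V\<^sub>X E\<^sub>X own\<^sub>X T\<^sub>X
proof
  show "finite V\<^sub>X"
    using arena unfolding VertX_def arena_def by simp
  show "E\<^sub>X \<subseteq> V\<^sub>X \<times> V\<^sub>X"
    by (rule EX_subset)
  fix u
  assume "u \<in> V\<^sub>X"
  then obtain v I where u: "u = (v, I)" "v \<in> V" "I \<subseteq> Pl"
    unfolding VertX_def by auto
  then obtain v' where "(v, v') \<in> E"
    using arena unfolding arena_def by blast
  then show "\<exists>w. (u, w) \<in> E\<^sub>X"
    using u unfolding EdgX_def by auto
next
  fix u w i
  assume "(u, w) \<in> E\<^sub>X" "u \<in> T\<^sub>X i"
  moreover have "w \<in> V\<^sub>X"
    using \<open>(u, w) \<in> E\<^sub>X\<close> EX_subset by blast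
  moreover have "snd u \<subseteq> snd w"
    using \<open>(u, w) \<in> E\<^sub>X\<close> unfolding EdgX_def by auto
  ultimately show "w \<in> T\<^sub>X i"
    unfolding FX_def by auto
qed

lemma x0_in_VX: "x0 Pl F v0 \<in> V\<^sub>X"
  using v0_in_V unfolding x0_def VertX_def by auto

lemma reachable_in_VX: "(x0 Pl F v0, u) \<in> E\<^sub>X\<^sup>* \<Longrightarrow> u \<in> V\<^sub>X"
  by (induction rule: rtrancl_induct) (use x0_in_VX EX_subset in auto)

lemma in_TX_iff: "u \<in> V\<^sub>X \<Longrightarrow> u \<in> T\<^sub>X i \<longleftrightarrow> i \<in> snd u"
  unfolding FX_def by simp

lemma N_pos: "N \<ge> 1"
proof -
  have "calI Pl E F v0 \<subseteq> Pow Pl"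
    using reachable_in_VX unfolding calI_def VertX_def by auto
  then have "finite (calI Pl E F v0)"
    using arena unfolding arena_def by (auto intro: finite_subset)
  moreover have "snd (x0 Pl F v0) \<in> calI Pl E F v0"
    unfolding calI_def by (auto simp: x0_def)
  ultimately show ?thesis
    by (simp add: Suc_le_eq card_gt_0_iff) blast
qed

lemma reachable_in_Vge_1:
  assumes "(x0 Pl F v0, u) \<in> E\<^sub>X\<^sup>*"
  shows "u \<in> Vge V J N 1"
proof -
  obtain v I where u: "u = (v, I)"
    by (cases u)
  then have "v \<in> V"
    using reachable_in_VX[OF assms] unfolding VertX_def by auto
  have "I \<in> J ` {1..N}"
    using assms u order unfolding admissible_order_def bij_betw_def calI_def by blast
  then show ?thesis
    unfolding Vge_def using u \<open>v \<in> V\<close> by auto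
qed

lemma finite_Vge_0: "finite (Vge V J N 0)"
proof -
  have "Vge V J N 0 \<subseteq> (\<lambda>(v, m). (v, J m)) ` (V \<times> {0..N})"
    unfolding Vge_def by auto
  moreover have "finite V"
    using arena unfolding arena_def by simp
  ultimately show ?thesis
    using finite_subset by blast
qed

lemma Vge_antimono: "m \<le> n \<Longrightarrow> Vge V J N n \<subseteq> Vge V J N m"
  unfolding Vge_def by (auto intro: le_trans)

lemma update_outside: "u \<notin> Vge V J N n \<Longrightarrow> update lam n u = lam u"
  unfolding lam_update_def by simp

lemma update_mono:
  assumes "\<And>u. lam1 u \<le> lam2 u"
  shows "update lam1 n u \<le> update lam2 n u"
proof -
  have "Lam Pl V own E F lam1 w \<subseteq> Lam Pl V own E F lam2 w" for w
    unfolding Lam_def using assms order_trans by blast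
  then have "(INF w\<in>W. SUP \<rho>\<in>Lam Pl V own E F lam1 w. cost (T\<^sub>X i) \<rho>)
      \<le> (INF w\<in>W. SUP \<rho>\<in>Lam Pl V own E F lam2 w. cost (T\<^sub>X i) \<rho>)" for W i
    by (intro INF_mono' SUP_subset_mono) simp_all
  then show ?thesis
    unfolding lam_update_def using assms add_left_mono by auto
qed

lemma update_eq_INF:
  assumes "u \<in> Vge V J N n" "own\<^sub>X u \<notin> snd u"
  shows "update lam n u = 1 + (INF w\<in>{w. (u, w) \<in> E\<^sub>X}. SUP \<rho>\<in>cplays lam w. cost (T\<^sub>X (own\<^sub>X u)) \<rho>)"
  using assms unfolding lam_update_def Lam_eq_consistent_plays by simp

definition lab :: "nat \<Rightarrow> 'v \<times> 'p set \<Rightarrow> enat" where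
  "lab k = fst (lam_seq Pl V own E F v0 J k)"

definition idx :: "nat \<Rightarrow> nat" where
  "idx k = snd (lam_seq Pl V own E F v0 J k)"

lemma lab_0: "lab 0 = lam0 own" and idx_0: "idx 0 = N"
  unfolding lab_def idx_def by simp_all

lemma lab_Suc: "lab (Suc k) = update (lab k) (idx k)"
  unfolding lab_def idx_def by (simp add: case_prod_beta Let_def)

lemma idx_Suc: "idx (Suc k) = (if lab (Suc k) = lab k \<and> idx k > 1 then idx k - 1 else idx k)"
  unfolding lab_def idx_def by (simp add: case_prod_beta Let_def)

lemma idx_pos: "idx k \<ge> 1"
  by (induction k) (use N_pos idx_0 idx_Suc in auto)

lemma idx_le_N: "idx k \<le> N"
  by (induction k) (use idx_0 idx_Suc in auto)

lemma lab_outside: "u \<notin> Vge V J N (idx k) \<Longrightarrow> lab k u = lam0 own u"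
proof (induction k)
  case (Suc k)
  have "Vge V J N (idx k) \<subseteq> Vge V J N (idx (Suc k))"
    using idx_Suc[of k] by (intro Vge_antimono) simp
  then have "u \<notin> Vge V J N (idx k)"
    using Suc.prems by blast
  then show ?case
    using Suc.IH by (simp add: lab_Suc update_outside)
qed (simp add: lab_0)

lemma lab_antitone: "lab (Suc k) u \<le> lab k u"
proof (induction k arbitrary: u)
  case 0
  show ?case
    unfolding lab_Suc lab_0 lam_update_def lam0_def by auto
next
  case (Suc k)
  show ?case
  proof (cases "idx (Suc k) = idx k")
    case True
    have "lab (Suc (Suc k)) u = update (lab (Suc k)) (idx k) u"
      using lab_Suc[of "Suc k"] True by simp
    also have "\<dots> \<le> update (lab k) (idx k) u"
      by (rule update_mono) (rule Suc.IH)
    also have "\<dots> = lab (Suc k) u"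
      by (simp add: lab_Suc)
    finally show ?thesis .
  next
    case False
    then have same: "lab (Suc k) = lab k"
      using idx_Suc[of k] by (auto split: if_splits)
    show ?thesis
    proof (cases "u \<in> Vge V J N (idx k)")
      case True
      then have "u \<in> Vge V J N (idx (Suc k))"
        using Vge_antimono[of "idx (Suc k)" "idx k"] idx_Suc[of k] by auto
      then have "lab (Suc (Suc k)) u = update (lab k) (idx k) u"
        using True by (simp add: lab_Suc[of "Suc k"] same lam_update_def)
      then show ?thesis
        by (simp add: lab_Suc)
    next
      case False
      then have "lab k u = lam0 own u"
        by (rule lab_outside)
      then show ?thesis
        using same unfolding lab_Suc lam_update_def lam0_def by auto
    qed
  qed
qed

lemma lab_eventually_const: "\<exists>K. \<forall>k\<ge>K. lab k = lab K"
proof -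
  have "\<forall>u. \<exists>K. \<forall>k\<ge>K. lab k u = lab K u"
  proof
    fix u
    show "\<exists>K. \<forall>k\<ge>K. lab k u = lab K u"
      by (rule enat_antitone_eventually_const) (rule lab_antitone)
  qed
  from choice[OF this] obtain K where K: "\<forall>u. \<forall>k\<ge>K u. lab k u = lab (K u) u"
    by blast
  define K\<^sub>0 where "K\<^sub>0 = (\<Sum>u\<in>Vge V J N 0. K u)"
  have "lab k u = lab K\<^sub>0 u" if "K\<^sub>0 \<le> k" for k u
  proof (cases "u \<in> Vge V J N 0")
    case True
    then have "K u \<le> K\<^sub>0"
      unfolding K\<^sub>0_def using finite_Vge_0 by (intro member_le_sum) auto
    then have "lab k u = lab (K u) u" "lab K\<^sub>0 u = lab (K u) u"
      using K le_trans[OF _ that] by blast+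
    then show ?thesis
      by simp
  next
    case False
    then have "u \<notin> Vge V J N (idx j)" for j
      using Vge_antimono[of 0 "idx j"] by blast
    then show ?thesis
      using lab_outside[of u k] lab_outside[of u K\<^sub>0] by simp
  qed
  then show ?thesis by blast
qed

lemma lab_eq_lam_star: "\<exists>K. \<forall>k\<ge>K. lab k = lam_star Pl V own E F v0 J"
proof -
  obtain K where K: "\<forall>k\<ge>K. lab k = lab K"
    using lab_eventually_const by blast
  have "lam_star Pl V own E F v0 J = lab K"
    unfolding lam_star_def lab_def[symmetric]
  proof (rule the_equality)
    show "\<exists>K'. \<forall>k\<ge>K'. lab k = lab K"
      using K by blast
  next
    fix l
    assume "\<exists>K'. \<forall>k\<ge>K'. lab k = l"
    then obtain K' where "\<forall>k\<ge>K'. lab k = l"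
      by blast
    then have "lab (max K K') = l"
      by simp
    moreover have "lab (max K K') = lab K"
      using K[rule_format, OF max.cobounded1] .
    ultimately show "l = lab K"
      by simp
  qed
  have "lab k = lam_star Pl V own E F v0 J" if "K \<le> k" for k
    using K[rule_format, OF that] \<open>lam_star Pl V own E F v0 J = lab K\<close> by simp
  then show ?thesis
    by blast
qed

text \<open>Once the sequence is constant its index drops to \<open>1\<close>, and the update at index \<open>1\<close> acts on
  every reachable vertex (\<open>reachable_in_Vge_1\<close>).\<close>
lemma lam_star_fixpoint: "update (lam_star Pl V own E F v0 J) 1 = lam_star Pl V own E F v0 J"
proof -
  obtain K where K: "\<forall>k\<ge>K. lab k = lam_star Pl V own E F v0 J"
    using lab_eq_lam_star by blast
  have const: "lab (Suc k) = lab k" if "k \<ge> K" for k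
    using K that by simp
  have "idx (K + j) = 1 \<or> idx (K + j) + j \<le> idx K" for j
  proof (induction j)
    case (Suc j)
    then show ?case
      using idx_Suc[of "K + j"] const[of "K + j"] idx_pos[of "K + j"] by auto
  qed simp
  from this[of N] have "idx (K + N) = 1"
    using idx_le_N[of K] idx_pos[of "K + N"] by auto
  then show ?thesis
    using lab_Suc[of "K + N"] K by simp
qed

lemma lam_star_le_succ:
  assumes "(x0 Pl F v0, u) \<in> E\<^sub>X\<^sup>*" "u \<notin> T\<^sub>X (own\<^sub>X u)" "(u, w) \<in> E\<^sub>X"
  shows "lam_star Pl V own E F v0 J u \<le> 1 + (SUP \<rho>\<in>cplays (lam_star Pl V own E F v0 J) w. cost (T\<^sub>X (own\<^sub>X u)) \<rho>)"
proof -
  let ?lam = "lam_star Pl V own E F v0 J"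
  have "own\<^sub>X u \<notin> snd u"
    using assms(2) in_TX_iff reachable_in_VX[OF assms(1)] by blast
  have "?lam u = update ?lam 1 u"
    by (simp only: lam_star_fixpoint)
  also have "\<dots> = 1 + (INF w\<in>{w. (u, w) \<in> E\<^sub>X}. SUP \<rho>\<in>cplays ?lam w. cost (T\<^sub>X (own\<^sub>X u)) \<rho>)"
    by (rule update_eq_INF[OF reachable_in_Vge_1[OF assms(1)] \<open>own\<^sub>X u \<notin> snd u\<close>])
  also have "\<dots> \<le> 1 + (SUP \<rho>\<in>cplays ?lam w. cost (T\<^sub>X (own\<^sub>X u)) \<rho>)"
    using assms(3) by (intro add_left_mono INF_lower) simp
  finally show ?thesis .
qed

lemma spe_play_cost_eq_0:
  assumes "history g" "own\<^sub>X (last g) \<in> snd (last g)"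
  shows "cost (T\<^sub>X (own\<^sub>X (last g))) (spe_play g) = 0"
proof -
  have "g \<noteq> []"
    using assms(1) by (simp add: is_history_def)
  moreover have "last g \<in> V\<^sub>X"
    using assms(1) by (rule last_in_V_if_is_history)
  ultimately have "spe_play g 0 \<in> T\<^sub>X (own\<^sub>X (last g))"
    using assms(2) in_TX_iff spe_play_0 by simp
  then show ?thesis
    by (rule cost_eq_0)
qed

lemma spe_play_cost_le_lam0:
  "history g \<Longrightarrow> cost (T\<^sub>X (own\<^sub>X (last g))) (spe_play g) \<le> lam0 own (last g)"
  using spe_play_cost_eq_0[of g] by (simp add: lam0_def)

lemma spe_play_cost_le_update:
  assumes g: "history g" and consistent: "\<And>h. history h \<Longrightarrow> spe_play h \<in> cplays lam (last h)"
  shows "cost (T\<^sub>X (own\<^sub>X (last g))) (spe_play g) \<le> update lam n (last g)"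
proof -
  let ?u = "last g"
  let ?j = "own\<^sub>X ?u"
  have "?u \<in> V\<^sub>X"
    using g by (rule last_in_V_if_is_history)
  consider (outside) "?u \<notin> Vge V J N n" | (target) "?j \<in> snd ?u"
    | (inside) "?u \<in> Vge V J N n" "?j \<notin> snd ?u"
    by blast
  then show ?thesis
  proof cases
    case outside
    show ?thesis
      unfolding update_outside[OF outside] by (rule consistent_plays_cost_le[OF consistent[OF g]])
  next
    case target
    then show ?thesis
      using spe_play_cost_eq_0[OF g] by simp
  next
    case inside
    define f where "f w = (SUP \<rho>\<in>cplays lam w. cost (T\<^sub>X ?j) \<rho>)" for w
    have "{w. (?u, w) \<in> E\<^sub>X} \<noteq> {}"
      using has_succ[OF \<open>?u \<in> V\<^sub>X\<close>] by blast
    then obtain w where w: "w \<in> {w. (?u, w) \<in> E\<^sub>X}" "(INF w\<in>{w. (?u, w) \<in> E\<^sub>X}. f w) = f w"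
      using enat_INF_attained[of "{w. (?u, w) \<in> E\<^sub>X}" f] by blast
    have "?u \<notin> T\<^sub>X ?j"
      using inside(2) in_TX_iff[OF \<open>?u \<in> V\<^sub>X\<close>] by blast
    have edge: "(?u, w) \<in> E\<^sub>X"
      using w(1) by simp
    have "spe_play (g @ [w]) \<in> cplays lam w"
      using consistent[OF history_snoc_edge[OF g edge]] by simp
    then have "cost (T\<^sub>X ?j) (spe_play g) \<le> 1 + f w"
      unfolding f_def by (rule spe_play_cost_le_SUP[OF g \<open>?u \<notin> T\<^sub>X ?j\<close> edge])
    also have "\<dots> = 1 + (INF w\<in>{w. (?u, w) \<in> E\<^sub>X}. f w)"
      by (simp only: w(2))
    also have "\<dots> = update lam n ?u"
      unfolding update_eq_INF[OF inside] f_def ..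
    finally show ?thesis .
  qed
qed

lemma spe_play_consistent_lab: "history g \<Longrightarrow> spe_play g \<in> cplays (lab k) (last g)"
proof (induction k arbitrary: g)
  case 0
  show ?case
    unfolding lab_0 using 0 spe_play_cost_le_lam0 by (rule spe_play_consistent)
next
  case (Suc k)
  have "cost (T\<^sub>X (own\<^sub>X (last h))) (spe_play h) \<le> lab (Suc k) (last h)" if "history h" for h
    unfolding lab_Suc using that Suc.IH by (rule spe_play_cost_le_update)
  then show ?case
    by (rule spe_play_consistent[OF Suc.prems])
qed

lemma stable_labelling_lam_star:
  assumes "\<rho>0 \<in> Lam_star Pl V own E F v0 J (x0 Pl F v0)"
  shows "stable_labelling V\<^sub>X E\<^sub>X own\<^sub>X T\<^sub>X (lam_star Pl V own E F v0 J) (x0 Pl F v0) \<rho>0"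
proof unfold_locales
  show "x0 Pl F v0 \<in> V\<^sub>X"
    by (rule x0_in_VX)
  show "cplays (lam_star Pl V own E F v0 J) w \<noteq> {}" if "(x0 Pl F v0, w) \<in> E\<^sub>X\<^sup>*" for w
  proof -
    obtain K where "lab K = lam_star Pl V own E F v0 J"
      using lab_eq_lam_star by blast
    then show ?thesis
      using spe_play_consistent_lab[of "[w]" K] reachable_in_VX[OF that] by auto
  qed
  show "\<rho>0 \<in> cplays (lam_star Pl V own E F v0 J) (x0 Pl F v0)"
    using assms unfolding Lam_star_def Lam_eq_consistent_plays .
qed (rule lam_star_le_succ)

end

theorem proposition2p14:
  fixes Pl :: "'p set" and V :: "'v set" and own :: "'v \<Rightarrow> 'p" and E :: "('v \<times> 'v) set"
    and F :: "'p \<Rightarrow> 'v set" and v0 :: 'v and J :: "nat \<Rightarrow> 'p set"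
    and \<rho>0 :: "nat \<Rightarrow> 'v \<times> 'p set"
  assumes "arena Pl V own E"
    and "\<forall>i\<in>Pl. F i \<subseteq> V"
    and "v0 \<in> V"
    and "admissible_order Pl E F v0 J"
    and "\<rho>0 \<in> Lam_star Pl V own E F v0 J (x0 Pl F v0)"
  shows "\<exists>\<sigma>. is_profile Pl (VertX V Pl) (ownX own) (EdgX Pl E F) \<sigma>
           \<and> is_SPE Pl (VertX V Pl) (ownX own) (EdgX Pl E F) (FX V Pl) \<sigma> (x0 Pl F v0)
           \<and> outcome (ownX own) \<sigma> (x0 Pl F v0) = \<rho>0"
proof -
  interpret extended_game Pl V own E F v0 J
    using assms(1,3,4) by unfold_locales
  interpret P: stable_labelling V\<^sub>X E\<^sub>X own\<^sub>X T\<^sub>X "lam_star Pl V own E F v0 J" "x0 Pl F v0" \<rho>0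
    using assms(5) by (rule stable_labelling_lam_star)
  let ?\<sigma> = "\<lambda>i. P.punishing_strategy"
  have profile: "is_profile Pl V\<^sub>X own\<^sub>X E\<^sub>X ?\<sigma>"
    using P.punishing_strategy_legal unfolding is_profile_def is_strategy_def by blast
  moreover have "is_SPE Pl V\<^sub>X own\<^sub>X E\<^sub>X T\<^sub>X ?\<sigma> (x0 Pl F v0)"
    using profile P.punishing_strategy_NE by (rule is_SPE_if_NE_after_histories)
  moreover have "outcome own\<^sub>X ?\<sigma> (x0 Pl F v0) = \<rho>0"
    using P.outcome_punishing_strategy by (simp add: outcome_eq_outcome_after)
  ultimately show ?thesis
    by blast
qed

end
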